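(* Let $k\ge3$ be an integer, $p$ a prime and $d\ge1$ with $q=p^d>\left(\tfrac12k(k-1)\right)^{k(k-1)}$ and $q\equiv k(k-1)+1\pmod{2k(k-1)}$. Let $H_0$ be the subgroup of order $(q-1)/(k(k-1))$ of ${\rm GF}(q)^\times$ and $G=\{x\mapsto ax+b: a\in H_0,\ b\in{\rm GF}(q)\}$, a nonabelian subgroup of the affine group of ${\rm GF}(q)$ isomorphic to $({\rm GF}(q),+)\rtimes C_{(q-1)/(k(k-1))}$. Then $G$ contains a regular \[\left(\frac{q(q-1)}{k(k-1)},\ \frac{k(q-k)}{k-1},\ \frac{q-1}{k-1}+(k-1)^2-2,\ k^2\right)\text{-PDS}.\]
   Context: A $(v,k',\lambda,\mu)$-PDS in a group $G$ of order $v$ is a $k'$-subset $D$ such that every nonidentity element of $D$ is $xy^{-1}$ ($x,y\in D$) in exactly $\lambda$ ways and every nonidentity element of $G\setminus D$ in exactly $\mu$ ways; regular means $D=D^{(-1)}$ and $1\notin D$. *)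

theory Defs
  imports "HOL-Algebra.Group" "HOL-Number_Theory.Cong"
begin

definition is_pds :: "('g, 'b) monoid_scheme \<Rightarrow> 'g set \<Rightarrow> nat \<Rightarrow> nat \<Rightarrow> nat \<Rightarrow> nat \<Rightarrow> bool" where
  "is_pds G D v k' lam mu \<longleftrightarrow>
     card (carrier G) = v \<and> D \<subseteq> carrier G \<and> card D = k' \<and>
     (\<forall>g \<in> carrier G. g \<noteq> \<one>\<^bsub>G\<^esub> \<longrightarrow>
        card {(x, y). x \<in> D \<and> y \<in> D \<and> x \<otimes>\<^bsub>G\<^esub> inv\<^bsub>G\<^esub> y = g}
          = (if g \<in> D then lam else mu))"

definition is_regular_pds :: "('g, 'b) monoid_scheme \<Rightarrow> 'g set \<Rightarrow> nat \<Rightarrow> nat \<Rightarrow> nat \<Rightarrow> nat \<Rightarrow> bool" where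
  "is_regular_pds G D v k' lam mu \<longleftrightarrow>
     is_pds G D v k' lam mu \<and> (\<lambda>x. inv\<^bsub>G\<^esub> x) ` D = D \<and> \<one>\<^bsub>G\<^esub> \<notin> D"

text \<open>The group {x \<mapsto> a x + b : a \<in> H, b \<in> F} of affine maps of the field F, with
  composition; the pair (a,b) represents x \<mapsto> a x + b, and (a,b)\<cdot>(c,d) is the map
  x \<mapsto> a (c x + d) + b.\<close>
definition affine_group :: "'a::field set \<Rightarrow> ('a \<times> 'a) monoid" where
  "affine_group H = \<lparr> carrier = {(a, b). a \<in> H},
     monoid.mult = (\<lambda>(a, b) (c, d). (a * c, a * d + b)),
     one = (1, 0) \<rparr>"

end

theory Submission
  imports Defs "HOL-Algebra.Multiplicative_Group" "HOL-Library.Cardinality" "HOL-Analysis.Convex"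
begin

(* Write q - 1 = k (k - 1) n with n odd, so that H0 has index k (k - 1) in GF(q)^*.  Everything
   rests on a k-set B whose k (k - 1) differences a - b lie in distinct cosets of H0, hence in
   all of them.  Then the images of B under the affine maps x |-> h x + c (h in H0) form a design
   in which two points lie on exactly one block, D = {g <> 1. g B meets B} is closed under
   inversion, and counting the blocks that meet both B and a given block g B yields lambda and mu.

   To find B, fix a generator g of GF(q)^* and put m = k (k - 1) / 2, so that -1 = g^(m n) has
   discrete logarithm m modulo 2 m.  It suffices to find x_0, ..., x_(k-1) such that the
   logarithm of x_j - x_i (i < j) is congruent to sigma (i, j) modulo m for a bijection sigma from
   the pairs onto Z/m: the sign then separates a - b from b - a modulo 2 m.  Expanding each
   congruence condition into multiplicative characters of order m, the trivial characters
   count about q^k injective tuples, while each of the m^m - 1 other combinations contributes at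
   most q^(k-1) sqrt (q + 1), by a second moment estimate resting on Jacobi sums of modulus 1.
   This is where q > m^(2 m) is needed. *)

section \<open>Finite fields and their multiplicative subgroups\<close>

locale mult_subgroup =
  fixes H :: "'a::{field,finite} set"
  assumes zero_notin: "0 \<notin> H" and one_in: "1 \<in> H"
    and mult_closed: "x \<in> H \<Longrightarrow> y \<in> H \<Longrightarrow> x * y \<in> H"
    and inverse_closed: "x \<in> H \<Longrightarrow> inverse x \<in> H"
begin

lemma nonzero: "x \<in> H \<Longrightarrow> x \<noteq> 0"
  using zero_notin by auto

lemma divide_closed: "x \<in> H \<Longrightarrow> y \<in> H \<Longrightarrow> x / y \<in> H"
  by (simp add: divide_inverse mult_closed inverse_closed)

lemma pow_card_eq_one:
  assumes "h \<in> H" shows "h ^ card H = 1"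
proof -
  have "(\<Prod>y\<in>H. h * y) = (\<Prod>y\<in>H. y)"
    by (rule prod.reindex_bij_witness[of _ "\<lambda>y. y / h" "\<lambda>y. h * y"])
      (use assms nonzero in \<open>auto simp: mult_closed divide_closed\<close>)
  moreover have "(\<Prod>y\<in>H. h * y) = h ^ card H * (\<Prod>y\<in>H. y)"
    by (simp add: prod.distrib)
  moreover have "(\<Prod>y\<in>H. y) \<noteq> 0"
    using zero_notin by simp
  ultimately show ?thesis by simp
qed

end

lemma mult_subgroup_units: "mult_subgroup (- {0 :: 'a::{field,finite}})"
  by unfold_locales auto

lemma pow_card_minus_one_eq_one:
  fixes u :: "'a::{field,finite}"
  assumes "u \<noteq> 0" shows "u ^ (CARD('a) - 1) = 1"
  using mult_subgroup.pow_card_eq_one[OF mult_subgroup_units, of u] assms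
  by (simp add: Compl_eq_Diff_UNIV card_Diff_singleton)

lemma card_units_pos: "card (UNIV :: 'a::{field,finite} set) - 1 > 0"
proof -
  have "card {0, 1::'a} \<le> card (UNIV :: 'a set)"
    by (rule card_mono) auto
  then show ?thesis by simp
qed

text \<open>This is \<open>ring_of_type_algebra\<close> of \<open>HOL-Algebra.Algebraic_Closure_Type\<close>; importing that
  theory would make \<open>prime\<close> in the main theorem refer to \<open>Divisibility.prime\<close>.\<close>
definition field_ring :: "'a::field ring" where
  "field_ring = \<lparr>carrier = UNIV, monoid.mult = (*), one = 1, zero = 0, add = (+)\<rparr>"

lemma field_field_ring: "field (field_ring :: 'a::field ring)"
proof -
  have "\<exists>y. x + y = 0" for x :: 'a
    by (rule exI[of _ "- x"]) simp
  moreover have "x \<noteq> 0 \<Longrightarrow> \<exists>y. x * y = 1" for x :: 'a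
    by (rule exI[of _ "inverse x"]) simp
  ultimately show ?thesis
    unfolding field_ring_def by unfold_locales (auto simp: algebra_simps Units_def)
qed

lemma pow_field_ring: "x [^]\<^bsub>field_ring\<^esub> n = (x::'a::field) ^ n"
  by (induction n) (simp_all add: field_ring_def)

lemma finite_field_has_primitive_element:
  "\<exists>g::'a::{field,finite}. g \<noteq> 0 \<and> (\<forall>u. u \<noteq> 0 \<longrightarrow> (\<exists>i. u = g ^ i))"
proof -
  let ?R = "field_ring :: 'a ring"
  interpret field ?R
    by (rule field_field_ring)
  have "finite (carrier ?R)" by simp
  from finite_field_mult_group_has_gen[OF this] obtain g where g:
      "g \<in> carrier (mult_of ?R)"
      "carrier (mult_of ?R) = {g [^]\<^bsub>?R\<^esub> i | i::nat. i \<in> UNIV}"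
    by blast
  show ?thesis
  proof (rule exI[of _ g], intro conjI allI impI)
    show "g \<noteq> 0"
      using g(1) by (simp add: field_ring_def)
    fix u :: 'a assume "u \<noteq> 0"
    then have "u \<in> carrier (mult_of ?R)"
      by (simp add: field_ring_def)
    then obtain i :: nat where "u = g [^]\<^bsub>?R\<^esub> i"
      unfolding g(2) by blast
    then show "\<exists>i. u = g ^ i"
      unfolding pow_field_ring by blast
  qed
qed

section \<open>Discrete logarithms\<close>

lemma pow_mod_eq:
  fixes x :: "'a::monoid_mult"
  assumes "x ^ n = 1" shows "x ^ (i mod n) = x ^ i"
  by (metis assms mult_div_mod_eq power_add power_mult power_one mult_1)

lemma pow_eq_pow_iff_cong:
  fixes x :: "'a::idom"
  assumes "x \<noteq> 0" and pow_eq_one_iff: "\<And>a. x ^ a = 1 \<longleftrightarrow> n dvd a"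
  shows "x ^ a = x ^ b \<longleftrightarrow> [a = b] (mod n)"
proof -
  have *: "x ^ a = x ^ b \<longleftrightarrow> [a = b] (mod n)" if "b \<le> a" for a b
  proof -
    have "x ^ a = x ^ b * x ^ (a - b)" using that by (simp flip: power_add)
    then have "x ^ a = x ^ b \<longleftrightarrow> x ^ (a - b) = 1" using assms(1) by auto
    then show ?thesis using that by (simp add: pow_eq_one_iff cong_altdef_nat)
  qed
  show ?thesis
    using *[of a b] *[of b a] by (cases "b \<le> a") (auto simp: cong_sym_eq)
qed

locale primitive_element =
  fixes g :: "'a::{field,finite}"
  assumes nonzero: "g \<noteq> 0" and generates: "u \<noteq> 0 \<Longrightarrow> \<exists>i. u = g ^ i"
begin

lemma card_units_le_order:
  assumes "g ^ n = 1" "n > 0" shows "CARD('a) - 1 \<le> n"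
proof -
  have "- {0} \<subseteq> (\<lambda>i. g ^ i) ` {..<n}"
  proof
    fix u :: 'a assume "u \<in> - {0}"
    then obtain i where "u = g ^ i" using generates by auto
    also have "\<dots> = g ^ (i mod n)"
      using pow_mod_eq[OF assms(1)] by simp
    finally show "u \<in> (\<lambda>i. g ^ i) ` {..<n}"
      using assms by simp
  qed
  then have "card (- {0::'a}) \<le> card ((\<lambda>i. g ^ i) ` {..<n})"
    by (intro card_mono) simp_all
  also have "\<dots> \<le> n"
    using card_image_le[of "{..<n}"] by simp
  finally show ?thesis
    by (simp add: Compl_eq_Diff_UNIV card_Diff_singleton)
qed

lemma pow_eq_one_iff: "g ^ n = 1 \<longleftrightarrow> CARD('a) - 1 dvd n"
proof
  assume "g ^ n = 1"
  then have "g ^ (n mod (CARD('a) - 1)) = 1"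
    using pow_mod_eq[OF pow_card_minus_one_eq_one[OF nonzero]] by simp
  moreover have "n mod (CARD('a) - 1) < CARD('a) - 1"
    using card_units_pos[where 'a='a] by simp
  ultimately show "CARD('a) - 1 dvd n"
    using card_units_le_order[of "n mod (CARD('a) - 1)"] by (auto simp: not_le dvd_eq_mod_eq_0)
next
  assume "CARD('a) - 1 dvd n"
  then obtain c where "n = (CARD('a) - 1) * c" ..
  then show "g ^ n = 1"
    by (simp only: power_mult pow_card_minus_one_eq_one[OF nonzero] power_one)
qed

lemma pow_eq_pow_iff: "g ^ a = g ^ b \<longleftrightarrow> [a = b] (mod CARD('a) - 1)"
  by (rule pow_eq_pow_iff_cong[OF nonzero pow_eq_one_iff])

definition dlog :: "'a \<Rightarrow> nat" where "dlog u = (SOME i. g ^ i = u)"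
  \<comment> \<open>Arbitrary for \<open>u = 0\<close>, and otherwise only determined modulo \<open>CARD('a) - 1\<close>.\<close>

lemma pow_dlog: "u \<noteq> 0 \<Longrightarrow> g ^ dlog u = u"
  unfolding dlog_def by (metis (mono_tags) generates someI)

lemma cong_dlog_mult:
  "u \<noteq> 0 \<Longrightarrow> v \<noteq> 0 \<Longrightarrow> [dlog (u * v) = dlog u + dlog v] (mod CARD('a) - 1)"
  by (subst pow_eq_pow_iff[symmetric]) (simp add: pow_dlog power_add)

lemma cong_dlog_one: "[dlog 1 = 0] (mod CARD('a) - 1)"
  by (subst pow_eq_pow_iff[symmetric]) (simp add: pow_dlog)

lemma cong_dlog_generator: "[dlog g = 1] (mod CARD('a) - 1)"
  by (subst pow_eq_pow_iff[symmetric]) (simp add: pow_dlog nonzero)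

lemma pow_half_card_units:
  assumes "even (CARD('a) - 1)" shows "g ^ ((CARD('a) - 1) div 2) = -1"
proof -
  obtain r where r: "CARD('a) - 1 = 2 * r" using assms by (elim evenE)
  have "g ^ r * g ^ r = g ^ (CARD('a) - 1)"
    by (simp only: r mult_2 power_add)
  then have "g ^ r * g ^ r = 1"
    using pow_card_minus_one_eq_one[OF nonzero] by simp
  then have "(g ^ r - 1) * (g ^ r + 1) = 0" by (simp add: algebra_simps)
  moreover have "g ^ r \<noteq> 1"
    using card_units_le_order[of r] card_units_pos[where 'a='a] r by auto
  moreover have "(CARD('a) - 1) div 2 = r" using r by simp
  ultimately show ?thesis by (auto simp: eq_neg_iff_add_eq_0)
qed

lemma cong_dlog_minus_one:
  assumes "even (CARD('a) - 1)" shows "[dlog (-1) = (CARD('a) - 1) div 2] (mod CARD('a) - 1)"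
  unfolding pow_eq_pow_iff[symmetric] pow_half_card_units[OF assms] by (simp add: pow_dlog)

lemma dvd_dlog_subgroup:
  assumes "mult_subgroup H" and card_units: "CARD('a) - 1 = r * card H" and "h \<in> H"
  shows "r dvd dlog h"
proof -
  have "h \<noteq> 0" using assms mult_subgroup.nonzero by blast
  then have "g ^ (dlog h * card H) = 1"
    using mult_subgroup.pow_card_eq_one[OF assms(1,3)] by (simp add: power_mult pow_dlog)
  then have "r * card H dvd dlog h * card H"
    unfolding pow_eq_one_iff card_units .
  moreover have "H \<noteq> {}"
    using mult_subgroup.one_in[OF assms(1)] by blast
  ultimately show ?thesis by simp
qed

end

section \<open>Multiplicative characters of order dividing \<open>m\<close>\<close>

locale power_character = primitive_element g for g :: "'a::{field,finite}" +
  fixes m :: nat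
  assumes m_pos: "m > 0" and m_dvd_card_units: "m dvd CARD('a) - 1"
begin

definition \<omega> :: complex where "\<omega> = cis (2 * pi / m)"

lemma omega_nonzero: "\<omega> \<noteq> 0"
  by (simp add: \<omega>_def)

lemma omega_pow: "\<omega> ^ a = cis (2 * pi * a / m)"
proof -
  have "real a * (2 * pi / m) = 2 * pi * a / m" by simp
  then show ?thesis unfolding \<omega>_def DeMoivre by (simp only:)
qed

lemma norm_omega_pow [simp]: "norm (\<omega> ^ a) = 1"
  by (simp add: omega_pow)

lemma norm_omega [simp]: "norm \<omega> = 1"
  using norm_omega_pow[of 1] by simp

lemma omega_pow_eq_one_iff: "\<omega> ^ a = 1 \<longleftrightarrow> m dvd a"
proof
  assume "\<omega> ^ a = 1"
  then have "cos (2 * pi * a / m) = 1"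
    unfolding omega_pow by (metis Re_complex_of_real cis.sel(1) one_complex.sel(1))
  then obtain n :: int where "2 * pi * a / m = real_of_int n * 2 * pi"
    using cos_one_2pi_int by blast
  then have "real_of_int (int a) = real_of_int (n * int m)"
    using m_pos by (simp add: field_simps)
  then show "m dvd a"
    by (metis dvd_triv_right int_dvd_int_iff of_int_eq_iff)
next
  assume "m dvd a"
  then obtain t where "a = m * t" ..
  then have "2 * pi * a / m = 2 * pi * real t"
    using m_pos by simp
  then show "\<omega> ^ a = 1"
    unfolding omega_pow by (simp only: cis_multiple_2pi Ints_of_nat)
qed

lemma omega_pow_eq_pow_iff: "\<omega> ^ a = \<omega> ^ b \<longleftrightarrow> [a = b] (mod m)"
  by (rule pow_eq_pow_iff_cong[OF omega_nonzero omega_pow_eq_one_iff])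

lemma cong_mod_m:
  assumes "[a = b] (mod CARD('a) - 1)" shows "[a = b] (mod m)"
  using assms m_dvd_card_units by (rule cong_dvd_modulus_nat)

definition chi :: "nat \<Rightarrow> 'a \<Rightarrow> complex" where
  "chi j u = (if u = 0 then 0 else \<omega> ^ (j * dlog u))"

lemma chi_zero [simp]: "chi j 0 = 0"
  by (simp add: chi_def)

lemma chi_trivial: "chi 0 u = (if u = 0 then 0 else 1)"
  by (simp add: chi_def)

lemma norm_chi: "norm (chi j u) = (if u = 0 then 0 else 1)"
  by (simp add: chi_def)

lemma norm_chi_le: "norm (chi j u) \<le> 1"
  by (simp add: norm_chi)

lemma chi_eq_one_iff: "u \<noteq> 0 \<Longrightarrow> chi j u = 1 \<longleftrightarrow> m dvd j * dlog u"
  by (simp add: chi_def omega_pow_eq_one_iff)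

lemma chi_mult: "chi j (u * v) = chi j u * chi j v"
proof (cases "u = 0 \<or> v = 0")
  case False
  then have "[dlog (u * v) = dlog u + dlog v] (mod m)"
    by (intro cong_mod_m cong_dlog_mult) auto
  then have "[j * dlog (u * v) = j * dlog u + j * dlog v] (mod m)"
    by (metis cong_scalar_left distrib_left)
  then show ?thesis
    using False by (simp add: chi_def power_add flip: omega_pow_eq_pow_iff)
qed (auto simp: chi_def)

lemma chi_one [simp]: "chi j 1 = 1"
  using cong_scalar_left[OF cong_mod_m[OF cong_dlog_one], of j]
  by (simp add: chi_eq_one_iff cong_0_iff)

lemma chi_generator_neq_one:
  assumes "0 < j" "j < m" shows "chi j g \<noteq> 1"
proof
  assume "chi j g = 1"
  then have "[j * dlog g = 0] (mod m)"
    using nonzero by (simp add: chi_eq_one_iff cong_0_iff)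
  moreover have "[j * dlog g = j * 1] (mod m)"
    using cong_scalar_left[OF cong_mod_m[OF cong_dlog_generator]] .
  ultimately have "[j = 0] (mod m)"
    by (metis cong_sym cong_trans mult_1_right)
  then show False
    using assms by (simp add: cong_def)
qed

lemma chi_mult_cnj: "u \<noteq> 0 \<Longrightarrow> chi j u * cnj (chi j u) = 1"
  using complex_norm_square[of "chi j u"] by (simp add: norm_chi)

lemma chi_divide: "v \<noteq> 0 \<Longrightarrow> chi j (u / v) = chi j u * cnj (chi j v)"
  using chi_mult[of j "u / v" v] chi_mult_cnj[of v j]
  by (metis mult.assoc mult.right_neutral nonzero_divide_eq_eq)

lemma chi_uminus:
  assumes "2 * m dvd CARD('a) - 1" shows "chi j (- u) = chi j u"
proof -
  obtain c where c: "CARD('a) - 1 = 2 * m * c" using assms ..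
  have "[dlog (-1) = (CARD('a) - 1) div 2] (mod m)"
    using c by (intro cong_mod_m cong_dlog_minus_one) simp
  then have "m dvd dlog (-1)"
    using c by (simp add: cong_0_iff[symmetric] cong_def)
  then have "chi j (-1) = 1"
    by (simp add: chi_eq_one_iff)
  then show ?thesis
    using chi_mult[of j "-1" u] by simp
qed

lemma sum_chi_eq_0:
  assumes "0 < j" "j < m" shows "(\<Sum>t\<in>UNIV. chi j t) = 0"
proof -
  have "(\<Sum>t\<in>UNIV. chi j t) = (\<Sum>t\<in>UNIV. chi j (g * t))"
    by (rule sum.reindex_bij_witness[of _ "\<lambda>t. g * t" "\<lambda>t. t / g"]) (auto simp: nonzero)
  also have "\<dots> = chi j g * (\<Sum>t\<in>UNIV. chi j t)"
    by (simp add: chi_mult sum_distrib_left)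
  finally have "(1 - chi j g) * (\<Sum>t\<in>UNIV. chi j t) = 0"
    by (simp add: algebra_simps)
  then show ?thesis
    using chi_generator_neq_one[OF assms] by simp
qed

text \<open>A Jacobi-type sum: \<open>t \<mapsto> (a - t) / (b - t)\<close> maps the field minus \<open>b\<close> bijectively
  onto the field minus \<open>1\<close>.\<close>
lemma sum_chi_mult_cnj_shift:
  assumes "0 < j" "j < m" "a \<noteq> b"
  shows "(\<Sum>t\<in>UNIV. chi j (a - t) * cnj (chi j (b - t))) = -1"
proof -
  have "(\<Sum>t\<in>UNIV. chi j (a - t) * cnj (chi j (b - t))) = (\<Sum>t\<in>- {b}. chi j ((a - t) / (b - t)))"
    by (subst sum.mono_neutral_right[of UNIV "- {b}"]) (auto simp: chi_divide)
  also have "\<dots> = (\<Sum>s\<in>- {1}. chi j s)"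
  proof (rule sum.reindex_bij_witness[of _ "\<lambda>s. (a - s * b) / (1 - s)" "\<lambda>t. (a - t) / (b - t)"])
    fix t assume "t \<in> - {b}"
    then have "b - t \<noteq> 0" by simp
    then have "1 - (a - t) / (b - t) = (b - a) / (b - t)"
      and "a - (a - t) / (b - t) * b = t * (b - a) / (b - t)"
      by (simp_all add: field_simps)
    then show "(a - (a - t) / (b - t) * b) / (1 - (a - t) / (b - t)) = t"
      using assms \<open>b - t \<noteq> 0\<close> by simp
    show "(a - t) / (b - t) \<in> - {1}"
      using \<open>t \<in> - {b}\<close> assms by auto
  next
    fix s assume "s \<in> - {1::'a}"
    then have "1 - s \<noteq> 0" by simp
    then have "b - (a - s * b) / (1 - s) = (b - a) / (1 - s)"
      and "a - (a - s * b) / (1 - s) = s * (b - a) / (1 - s)"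
      by (simp_all add: field_simps)
    then show "(a - (a - s * b) / (1 - s)) / (b - (a - s * b) / (1 - s)) = s"
      using assms \<open>1 - s \<noteq> 0\<close> by simp
    show "(a - s * b) / (1 - s) \<in> - {b}"
      using \<open>s \<in> - {1}\<close> assms by (auto simp: field_simps)
  qed simp
  also have "\<dots> = (\<Sum>s\<in>UNIV. chi j s) - chi j 1"
    by (simp add: Compl_eq_Diff_UNIV sum_diff1)
  finally show ?thesis
    using sum_chi_eq_0[OF assms(1,2)] by simp
qed

lemma sum_chi_mult_cnj_omega:
  "(\<Sum>j<m. chi j u * cnj (\<omega> ^ (j * c))) = (if u \<noteq> 0 \<and> [dlog u = c] (mod m) then of_nat m else 0)"
proof (cases "u = 0")
  case False
  define z where "z = \<omega> ^ dlog u * cnj (\<omega> ^ c)"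
  have "chi j u * cnj (\<omega> ^ (j * c)) = z ^ j" for j
    using False by (simp add: chi_def z_def power_mult_distrib mult.commute[of j] power_mult)
  then have sum_eq: "(\<Sum>j<m. chi j u * cnj (\<omega> ^ (j * c))) = (\<Sum>j<m. z ^ j)"
    by simp
  have cnj_omega: "cnj (\<omega> ^ c) * \<omega> ^ c = 1"
    using complex_norm_square[of "\<omega> ^ c"] by (simp add: mult.commute)
  then have "z = 1 \<longleftrightarrow> \<omega> ^ dlog u = \<omega> ^ c"
    unfolding z_def by (metis mult.assoc mult.commute mult_1)
  then have z_eq_1: "z = 1 \<longleftrightarrow> [dlog u = c] (mod m)"
    by (simp add: omega_pow_eq_pow_iff)
  have "z ^ m = \<omega> ^ (m * dlog u) * cnj (\<omega> ^ (m * c))"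
    by (simp add: z_def power_mult_distrib mult.commute[of m] power_mult)
  also have "\<omega> ^ (m * dlog u) = 1"
    by (simp add: omega_pow_eq_one_iff)
  also have "\<omega> ^ (m * c) = 1"
    by (simp add: omega_pow_eq_one_iff)
  finally have "z ^ m = 1"
    by simp
  then show ?thesis
    using False sum_eq z_eq_1 by (auto simp: sum_gp_strict)
qed (simp add: chi_def)

end

section \<open>Character sum estimates\<close>

lemma sum_PiE_norm_sum_prod_squared:
  fixes f :: "'i \<Rightarrow> 't \<Rightarrow> 'y \<Rightarrow> complex"
  assumes "finite W" "finite Y"
  shows "of_real (\<Sum>x\<in>PiE W (\<lambda>_. Y). (norm (\<Sum>t\<in>T. \<Prod>w\<in>W. f w t (x w)))\<^sup>2)
    = (\<Sum>t\<in>T. \<Sum>s\<in>T. \<Prod>w\<in>W. \<Sum>y\<in>Y. f w t y * cnj (f w s y))"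
proof -
  have "of_real ((norm (\<Sum>t\<in>T. \<Prod>w\<in>W. f w t (x w)))\<^sup>2)
      = (\<Sum>t\<in>T. \<Sum>s\<in>T. \<Prod>w\<in>W. f w t (x w) * cnj (f w s (x w)))" for x
    by (simp only: complex_norm_square) (simp add: sum_product cnj_sum cnj_prod prod.distrib)
  then have "of_real (\<Sum>x\<in>PiE W (\<lambda>_. Y). (norm (\<Sum>t\<in>T. \<Prod>w\<in>W. f w t (x w)))\<^sup>2)
      = (\<Sum>t\<in>T. \<Sum>s\<in>T. \<Sum>x\<in>PiE W (\<lambda>_. Y). \<Prod>w\<in>W. f w t (x w) * cnj (f w s (x w)))"
    by (simp add: sum.swap[of _ "PiE W (\<lambda>_. Y)"])
  also have "\<dots> = (\<Sum>t\<in>T. \<Sum>s\<in>T. \<Prod>w\<in>W. \<Sum>y\<in>Y. f w t y * cnj (f w s y))"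
    using assms by (simp add: prod_sum_PiE)
  finally show ?thesis .
qed

lemma sum_PiE_split:
  assumes "finite I" "v \<in> I"
  shows "(\<Sum>x\<in>PiE I (\<lambda>_. A). F x) = (\<Sum>x\<in>PiE (I - {v}) (\<lambda>_. A). \<Sum>t\<in>A. F (x(v := t)))"
proof -
  have "PiE I (\<lambda>_. A) = (\<lambda>(t, x). x(v := t)) ` (A \<times> PiE (I - {v}) (\<lambda>_. A))"
    using PiE_insert_eq[of v "I - {v}" "\<lambda>_. A"] assms(2) by (simp add: insert_absorb)
  moreover have "inj_on (\<lambda>(t, x). x(v := t)) (A \<times> PiE (I - {v}) (\<lambda>_. A))"
    by (rule inj_combinator) simp
  ultimately have "(\<Sum>x\<in>PiE I (\<lambda>_. A). F x) = (\<Sum>(t, x)\<in>A \<times> PiE (I - {v}) (\<lambda>_. A). F (x(v := t)))"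
    by (simp add: sum.reindex case_prod_beta')
  also have "\<dots> = (\<Sum>x\<in>PiE (I - {v}) (\<lambda>_. A). \<Sum>t\<in>A. F (x(v := t)))"
    by (simp add: sum.cartesian_product[symmetric] sum.swap[of _ A])
  finally show ?thesis .
qed

lemma norm_sum_le_card:
  fixes f :: "'a::finite \<Rightarrow> 'b::real_normed_vector"
  assumes "\<And>y. norm (f y) \<le> 1"
  shows "norm (\<Sum>y\<in>UNIV. f y) \<le> CARD('a)"
proof -
  have "norm (\<Sum>y\<in>UNIV. f y) \<le> (\<Sum>y\<in>UNIV. norm (f y))"
    by (rule norm_sum)
  also have "\<dots> \<le> (\<Sum>y\<in>(UNIV :: 'a set). 1)"
    using assms by (intro sum_mono) auto
  finally show ?thesis by simp
qed

context power_character
begin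

text \<open>Off the at most \<open>card W - 1\<close> zeros of the trivial factors the product is a shifted
  character, whose complete sum vanishes.\<close>
lemma norm_sum_prod_chi_single_le:
  assumes W: "finite W" "w0 \<in> W" and trivial: "\<And>w. w \<in> W \<Longrightarrow> w \<noteq> w0 \<Longrightarrow> e w = 0"
    and "0 < e w0" "e w0 < m"
  shows "norm (\<Sum>t\<in>UNIV. \<Prod>w\<in>W. chi (e w) (t - x w)) \<le> card W - 1"
proof -
  define Z where "Z = x ` (W - {w0})"
  define f where "f t = chi (e w0) (t - x w0)" for t
  have prod_eq: "(\<Prod>w\<in>W. chi (e w) (t - x w)) = f t - (if t \<in> Z then f t else 0)" for t
  proof -
    have "(\<Prod>w\<in>W. chi (e w) (t - x w)) = f t * (\<Prod>w\<in>W - {w0}. chi (e w) (t - x w))"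
      using W by (simp add: prod.remove f_def)
    also have "(\<Prod>w\<in>W - {w0}. chi (e w) (t - x w)) = (\<Prod>w\<in>W - {w0}. chi 0 (t - x w))"
      using trivial by (intro prod.cong) auto
    also have "(\<Prod>w\<in>W - {w0}. chi 0 (t - x w)) = (if t \<in> Z then 0 else 1)"
    proof (cases "t \<in> Z")
      case True
      then obtain w where "w \<in> W - {w0}" "t = x w" by (auto simp: Z_def)
      then show ?thesis using True W by (auto simp: chi_trivial intro!: prod_zero)
    next
      case False
      then have "t - x w \<noteq> 0" if "w \<in> W - {w0}" for w
        using that by (auto simp: Z_def)
      then show ?thesis
        using False by (auto simp: chi_trivial intro!: prod.neutral)
    qed
    finally show ?thesis by simp
  qed
  have "(\<Sum>t\<in>UNIV. f t) = (\<Sum>t\<in>UNIV. chi (e w0) t)"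
    unfolding f_def by (rule sum.reindex_bij_witness[of _ "\<lambda>t. t + x w0" "\<lambda>t. t - x w0"]) auto
  then have "(\<Sum>t\<in>UNIV. f t) = 0"
    using sum_chi_eq_0 assms by simp
  then have "(\<Sum>t\<in>UNIV. \<Prod>w\<in>W. chi (e w) (t - x w)) = - (\<Sum>t\<in>Z. f t)"
    by (simp add: prod_eq sum_subtractf sum.inter_restrict[symmetric])
  then have "norm (\<Sum>t\<in>UNIV. \<Prod>w\<in>W. chi (e w) (t - x w)) \<le> (\<Sum>t\<in>Z. norm (f t))"
    by (simp add: norm_sum)
  also have "\<dots> \<le> (\<Sum>t\<in>Z. 1)"
    by (intro sum_mono) (simp add: f_def norm_chi_le)
  also have "\<dots> \<le> card W - 1"
    using W card_image_le[of "W - {w0}" x] by (simp add: Z_def)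
  finally show ?thesis by simp
qed

lemma norm_prod_sum_chi_mult_cnj_le:
  assumes W: "finite W" "w0 \<in> W" "w1 \<in> W" "w0 \<noteq> w1"
    and e: "0 < e w0" "e w0 < m" "0 < e w1" "e w1 < m"
  shows "norm (\<Prod>w\<in>W. \<Sum>y\<in>UNIV. chi (e w) (t - y) * cnj (chi (e w) (s - y)))
    \<le> (if t = s then real CARD('a) ^ card W else real CARD('a) ^ (card W - 2))"
proof -
  let ?S = "\<lambda>w. \<Sum>y\<in>UNIV. chi (e w) (t - y) * cnj (chi (e w) (s - y))"
  have trivial_bound: "norm (?S w) \<le> CARD('a)" for w
    by (rule norm_sum_le_card) (simp add: norm_mult norm_chi_le mult_le_one)
  have "norm (\<Prod>w\<in>W. ?S w) = (\<Prod>w\<in>W. norm (?S w))"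
    by (simp add: prod_norm)
  also have "\<dots> \<le> (if t = s then real CARD('a) ^ card W else real CARD('a) ^ (card W - 2))"
  proof (cases "t = s")
    case True
    then show ?thesis
      using prod_mono[of W "\<lambda>w. norm (?S w)" "\<lambda>_. real CARD('a)"] trivial_bound by simp
  next
    case False
    have "norm (?S w) = 1" if "w \<in> {w0, w1}" for w
      using sum_chi_mult_cnj_shift[of "e w" t s] False e that by auto
    then have "(\<Prod>w\<in>W. norm (?S w)) = (\<Prod>w\<in>W - {w0, w1}. norm (?S w))"
      using W by (subst prod.subset_diff[of "{w0, w1}"]) auto
    also have "\<dots> \<le> (\<Prod>w\<in>W - {w0, w1}. real CARD('a))"
      by (rule prod_mono) (simp add: trivial_bound)
    also have "\<dots> = real CARD('a) ^ (card W - 2)"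
      using W by (simp add: card_Diff_subset numeral_2_eq_2)
    finally show ?thesis using False by simp
  qed
  finally show ?thesis .
qed

text \<open>After expanding the square, for \<open>t \<noteq> s\<close> the factors at \<open>w0\<close> and \<open>w1\<close> are Jacobi-type
  sums of modulus \<open>1\<close>.\<close>
lemma sum_norm_sum_prod_chi_squared_le:
  assumes W: "finite W" "w0 \<in> W" "w1 \<in> W" "w0 \<noteq> w1"
    and e: "0 < e w0" "e w0 < m" "0 < e w1" "e w1 < m"
  shows "(\<Sum>x\<in>PiE W (\<lambda>_. UNIV). (norm (\<Sum>t\<in>UNIV. \<Prod>w\<in>W. chi (e w) (t - x w)))\<^sup>2)
    \<le> real CARD('a) ^ card W * (real CARD('a) + 1)"
proof -
  define q where "q = real CARD('a)"
  define n where "n = card W"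
  have "n \<ge> 2"
    using W card_mono[of W "{w0, w1}"] by (simp add: n_def)
  let ?L = "\<Sum>x\<in>PiE W (\<lambda>_. UNIV). (norm (\<Sum>t\<in>UNIV. \<Prod>w\<in>W. chi (e w) (t - x w)))\<^sup>2"
  have "?L = norm (of_real ?L :: complex)"
    by (simp only: norm_of_real) (simp add: sum_nonneg)
  also have "\<dots> = norm (\<Sum>t\<in>UNIV. \<Sum>s\<in>UNIV. \<Prod>w\<in>W. \<Sum>y\<in>UNIV. chi (e w) (t - y) * cnj (chi (e w) (s - y)))"
    by (simp only: sum_PiE_norm_sum_prod_squared[OF W(1) finite, where T = UNIV and f = "\<lambda>w t y. chi (e w) (t - y)"])
  also have "\<dots> \<le> (\<Sum>t\<in>(UNIV :: 'a set). \<Sum>s\<in>UNIV. if t = s then q ^ n else q ^ (n - 2))"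
    using norm_prod_sum_chi_mult_cnj_le[OF W e] unfolding q_def n_def
    by (intro order_trans[OF norm_sum] sum_mono order_trans[OF norm_sum]) auto
  also have "\<dots> = q * (q ^ n + (q - 1) * q ^ (n - 2))"
    by (simp add: sum.If_cases Compl_eq_Diff_UNIV card_Diff_singleton of_nat_diff q_def
        algebra_simps)
  also have "\<dots> \<le> q ^ n * (q + 1)"
  proof -
    have "q ^ n = q * q * q ^ (n - 2)"
      using \<open>n \<ge> 2\<close> by (metis le_add_diff_inverse power_add power2_eq_square)
    then show ?thesis by (simp add: algebra_simps q_def)
  qed
  finally show ?thesis unfolding q_def n_def by simp
qed

lemma sum_norm_sum_prod_chi_le:
  assumes W: "finite W" "w0 \<in> W" and e: "0 < e w0" "\<And>w. w \<in> W \<Longrightarrow> e w < m"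
    and small: "real (card W - 1) \<le> sqrt (real CARD('a) + 1)"
  shows "(\<Sum>x\<in>PiE W (\<lambda>_. UNIV). norm (\<Sum>t\<in>UNIV. \<Prod>w\<in>W. chi (e w) (t - x w)))
    \<le> real CARD('a) ^ card W * sqrt (real CARD('a) + 1)"
proof -
  let ?T = "\<lambda>x. norm (\<Sum>t\<in>UNIV. \<Prod>w\<in>W. chi (e w) (t - x w))"
  have card_PiE: "card (PiE W (\<lambda>_. UNIV :: 'a set)) = CARD('a) ^ card W"
    using W by (simp add: card_PiE)
  show ?thesis
  proof (cases "\<exists>w1\<in>W. w1 \<noteq> w0 \<and> e w1 \<noteq> 0")
    case False
    then have "?T x \<le> sqrt (real CARD('a) + 1)" for x
      using norm_sum_prod_chi_single_le[OF W, of e x] e W small by force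
    then have "(\<Sum>x\<in>PiE W (\<lambda>_. UNIV). ?T x) \<le> (\<Sum>x\<in>PiE W (\<lambda>_. UNIV :: 'a set). sqrt (real CARD('a) + 1))"
      by (rule sum_mono)
    then show ?thesis by (simp add: card_PiE)
  next
    case True
    then obtain w1 where "w1 \<in> W" "w1 \<noteq> w0" "e w1 \<noteq> 0" by blast
    then have "(\<Sum>x\<in>PiE W (\<lambda>_. UNIV). (?T x)\<^sup>2) \<le> real CARD('a) ^ card W * (real CARD('a) + 1)"
      using sum_norm_sum_prod_chi_squared_le[OF W, of w1 e] e W by auto
    then have "(\<Sum>x\<in>PiE W (\<lambda>_. UNIV). ?T x)\<^sup>2
        \<le> (real CARD('a) ^ card W * (real CARD('a) + 1)) * real CARD('a) ^ card W"
      using sum_squared_le_sum_of_squares[of ?T "PiE W (\<lambda>_. UNIV)"]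
      by (simp add: card_PiE order_trans mult_right_mono)
    also have "\<dots> = (real CARD('a) ^ card W * sqrt (real CARD('a) + 1))\<^sup>2"
      by (simp add: power_mult_distrib power2_eq_square)
    finally show ?thesis
      by (rule power2_le_imp_le) simp
  qed
qed

end

section \<open>Tuples with prescribed classes of differences\<close>

lemma card_ordered_pairs: "2 * card {(i, j). i < j \<and> j < (n::nat)} = n * (n - 1)"
proof (induction n)
  case (Suc n)
  have split: "{(i, j). i < j \<and> j < Suc n} = {(i, j). i < j \<and> j < n} \<union> (\<lambda>i. (i, n)) ` {..<n}"
    by auto
  have "finite {(i, j). i < j \<and> j < (n::nat)}"
    by (rule finite_subset[of _ "{..<n} \<times> {..<n}"]) auto
  moreover have "{(i, j). i < j \<and> j < n} \<inter> (\<lambda>i. (i, n)) ` {..<n} = {}"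
    by auto
  ultimately have "card {(i, j). i < j \<and> j < Suc n} = card {(i, j). i < j \<and> j < n} + n"
    unfolding split by (simp add: card_Un_disjoint card_image inj_on_def)
  then show ?case
    using Suc.IH by (cases n) (auto simp: algebra_simps)
qed simp

lemma bij_betw_pairs_containing:
  fixes v k :: nat
  assumes "v < k"
  shows "bij_betw (\<lambda>w. (min w v, max w v)) ({..<k} - {v})
    {(i, j). i < j \<and> j < k \<and> (i = v \<or> j = v)}"
proof (rule bij_betw_imageI)
  show "inj_on (\<lambda>w. (min w v, max w v)) ({..<k} - {v})"
    by (auto simp: inj_on_def min_def max_def split: if_splits)
  show "(\<lambda>w. (min w v, max w v)) ` ({..<k} - {v}) = {(i, j). i < j \<and> j < k \<and> (i = v \<or> j = v)}"
  proof (intro equalityI subsetI)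
    fix P assume "P \<in> {(i, j). i < j \<and> j < k \<and> (i = v \<or> j = v)}"
    then obtain i j where P: "P = (i, j)" "i < j" "j < k" "i = v \<or> j = v" by auto
    define w where "w = (if i = v then j else i)"
    have "P = (min w v, max w v)" "w \<in> {..<k} - {v}"
      using P by (auto simp: w_def min_def max_def)
    then show "P \<in> (\<lambda>w. (min w v, max w v)) ` ({..<k} - {v})"
      by blast
  qed (use assms in \<open>auto simp: min_def max_def\<close>)
qed

lemma minus_one_mult_sqrt_less:
  fixes Q M c :: real
  assumes Q: "Q > M\<^sup>2" and M: "M \<ge> c + 1" and c: "c \<ge> 0"
  shows "(M - 1) * sqrt (Q + 1) < Q - c"
proof -
  have "Q - 2 * c - (M - 1)\<^sup>2 \<ge> 1"
    using Q M by (simp add: power2_eq_square algebra_simps)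
  moreover have "Q \<ge> 0"
    using Q zero_le_power2[of M] by linarith
  ultimately have "Q * (Q - 2 * c - (M - 1)\<^sup>2) \<ge> Q"
    using mult_left_mono by fastforce
  moreover have "(M - 1)\<^sup>2 < Q"
    using Q M c by (simp add: power2_eq_square algebra_simps)
  moreover have "(Q - c)\<^sup>2 - (M - 1)\<^sup>2 * (Q + 1) = Q * (Q - 2 * c - (M - 1)\<^sup>2) + c\<^sup>2 - (M - 1)\<^sup>2"
    by (simp add: power2_eq_square algebra_simps)
  ultimately have "sqrt ((M - 1)\<^sup>2 * (Q + 1)) < sqrt ((Q - c)\<^sup>2)"
    using zero_le_power2[of c] by (intro real_sqrt_less_mono) linarith
  moreover have "Q - c > 0"
  proof -
    have "0 \<le> M * (M - 1)"
      using M c by simp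
    then show ?thesis
      using Q M by (simp add: power2_eq_square algebra_simps)
  qed
  ultimately show ?thesis
    using M c by (simp add: real_sqrt_mult)
qed

locale prescribed_differences = primitive_element g for g :: "'a::{field,finite}" +
  fixes k m n :: nat
  assumes k_ge_3: "k \<ge> 3" and two_m: "2 * m = k * (k - 1)"
    and card_units: "CARD('a) - 1 = 2 * m * n" and odd_n: "odd n"
    and card_large: "(m ^ m)\<^sup>2 < CARD('a)"
begin

lemma k_le_m: "k \<le> m"
proof -
  have "k * 2 \<le> k * (k - 1)"
    using k_ge_3 by (intro mult_le_mono2) simp
  then show ?thesis
    using two_m by linarith
qed

sublocale power_character g m
  using k_le_m k_ge_3 card_units by unfold_locales auto

definition pairs :: "(nat \<times> nat) set" where "pairs = {(i, j). i < j \<and> j < k}"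

definition pair_diff :: "nat \<times> nat \<Rightarrow> (nat \<Rightarrow> 'a) \<Rightarrow> 'a"
  where "pair_diff P x = x (snd P) - x (fst P)"

abbreviation tuples :: "(nat \<Rightarrow> 'a) set" where "tuples \<equiv> PiE {..<k} (\<lambda>_. UNIV)"

lemma finite_pairs: "finite pairs"
  unfolding pairs_def by (rule finite_subset[of _ "{..<k} \<times> {..<k}"]) auto

lemma card_pairs: "card pairs = m"
  using card_ordered_pairs[of k] two_m by (simp add: pairs_def)

lemma card_pair_diff_eq_0:
  assumes "P \<in> pairs" shows "card {x \<in> tuples. pair_diff P x = 0} = CARD('a) ^ (k - 1)"
proof -
  obtain i j where P: "P = (i, j)" "i < j" "j < k"
    using assms by (auto simp: pairs_def)
  have "card {x \<in> tuples. pair_diff P x = 0} = (\<Sum>x\<in>tuples. if pair_diff P x = 0 then 1 else 0)"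
    using sum.inter_filter[of tuples "\<lambda>_. 1 :: nat" "\<lambda>x. pair_diff P x = 0"] by (simp add: finite_PiE)
  also have "\<dots> = (\<Sum>x\<in>PiE ({..<k} - {j}) (\<lambda>_. UNIV :: 'a set). \<Sum>t\<in>UNIV. if t = x i then 1 else 0)"
    using P by (subst sum_PiE_split[of _ j]) (auto simp: pair_diff_def intro!: sum.cong)
  also have "\<dots> = CARD('a) ^ (k - 1)"
    using P by (simp add: card_PiE)
  finally show ?thesis .
qed

definition injective_tuples :: "(nat \<Rightarrow> 'a) set"
  where "injective_tuples = {x \<in> tuples. \<forall>P\<in>pairs. pair_diff P x \<noteq> 0}"

lemma card_injective_tuples_ge:
  "real (card injective_tuples) \<ge> real CARD('a) ^ k - m * real CARD('a) ^ (k - 1)"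
proof -
  have "tuples - injective_tuples = (\<Union>P\<in>pairs. {x \<in> tuples. pair_diff P x = 0})"
    by (auto simp: injective_tuples_def)
  then have "card (tuples - injective_tuples) \<le> (\<Sum>P\<in>pairs. card {x \<in> tuples. pair_diff P x = 0})"
    by (simp add: card_UN_le finite_pairs)
  also have "\<dots> = m * CARD('a) ^ (k - 1)"
    by (simp add: card_pair_diff_eq_0 card_pairs)
  finally have "card (tuples - injective_tuples) \<le> m * CARD('a) ^ (k - 1)" .
  moreover have "card (tuples - injective_tuples) = CARD('a) ^ k - card injective_tuples"
    by (subst card_Diff_subset) (auto simp: injective_tuples_def card_PiE finite_PiE)
  moreover have "card injective_tuples \<le> CARD('a) ^ k"
    using card_mono[of tuples injective_tuples] by (auto simp: injective_tuples_def card_PiE finite_PiE)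
  ultimately show ?thesis
    by (simp flip: of_nat_power of_nat_mult add: of_nat_diff)
qed


lemma two_m_dvd_card_units: "2 * m dvd CARD('a) - 1"
  using card_units by simp

lemma k_minus_2_le_sqrt: "real (k - 2) \<le> sqrt (real CARD('a) + 1)"
proof -
  have "real m \<le> real m ^ m"
    using k_le_m k_ge_3 by (intro self_le_power) auto
  then have "real (k - 2) \<le> real m ^ m"
    using k_le_m by linarith
  also have "\<dots> = sqrt ((real m ^ m)\<^sup>2)"
    by simp
  also have "\<dots> \<le> sqrt (real CARD('a) + 1)"
    using card_large by (simp flip: of_nat_power)
  finally show ?thesis .
qed

definition pairs_containing :: "nat \<Rightarrow> (nat \<times> nat) set"
  where "pairs_containing v = {(i, j). i < j \<and> j < k \<and> (i = v \<or> j = v)}"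

text \<open>Only the factors indexed by pairs containing \<open>v\<close> depend on \<open>x v\<close>; since the
  characters are even, each of them is a character of \<open>x v - x w\<close>.\<close>
lemma prod_chi_pair_diff_fun_upd:
  assumes "v < k"
  shows "(\<Prod>P\<in>pairs. chi (c P) (pair_diff P (x(v := t))))
    = (\<Prod>P\<in>pairs - pairs_containing v. chi (c P) (pair_diff P x))
      * (\<Prod>w\<in>{..<k} - {v}. chi (c (min w v, max w v)) (t - x w))"
proof -
  have "pairs_containing v \<subseteq> pairs"
    by (auto simp: pairs_containing_def pairs_def)
  then have "(\<Prod>P\<in>pairs. chi (c P) (pair_diff P (x(v := t))))
      = (\<Prod>P\<in>pairs - pairs_containing v. chi (c P) (pair_diff P (x(v := t))))
        * (\<Prod>P\<in>pairs_containing v. chi (c P) (pair_diff P (x(v := t))))"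
    by (rule prod.subset_diff[OF _ finite_pairs])
  also have "(\<Prod>P\<in>pairs - pairs_containing v. chi (c P) (pair_diff P (x(v := t))))
      = (\<Prod>P\<in>pairs - pairs_containing v. chi (c P) (pair_diff P x))"
    by (intro prod.cong) (auto simp: pairs_containing_def pairs_def pair_diff_def)
  also have "(\<Prod>P\<in>pairs_containing v. chi (c P) (pair_diff P (x(v := t))))
      = (\<Prod>w\<in>{..<k} - {v}. chi (c (min w v, max w v)) (pair_diff (min w v, max w v) (x(v := t))))"
  proof -
    have "bij_betw (\<lambda>w. (min w v, max w v)) ({..<k} - {v}) (pairs_containing v)"
      unfolding pairs_containing_def by (rule bij_betw_pairs_containing[OF assms])
    then show ?thesis
      by (rule prod.reindex_bij_betw[symmetric])
  qed
  also have "\<dots> = (\<Prod>w\<in>{..<k} - {v}. chi (c (min w v, max w v)) (t - x w))"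
  proof (rule prod.cong)
    fix w assume w: "w \<in> {..<k} - {v}"
    show "chi (c (min w v, max w v)) (pair_diff (min w v, max w v) (x(v := t)))
        = chi (c (min w v, max w v)) (t - x w)"
    proof (cases "w < v")
      case False
      then have "pair_diff (min w v, max w v) (x(v := t)) = - (t - x w)"
        using w by (simp add: pair_diff_def)
      then show ?thesis
        by (simp only: chi_uminus[OF two_m_dvd_card_units])
    qed (use w in \<open>simp add: pair_diff_def\<close>)
  qed simp
  finally show ?thesis .
qed

lemma norm_sum_prod_chi_pair_diff_le:
  assumes c: "c \<in> PiE pairs (\<lambda>_. {..<m})" and P0: "P0 \<in> pairs" "c P0 \<noteq> 0"
  shows "norm (\<Sum>x\<in>tuples. \<Prod>P\<in>pairs. chi (c P) (pair_diff P x))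
    \<le> real CARD('a) ^ (k - 1) * sqrt (real CARD('a) + 1)"
proof -
  obtain u v where uv: "P0 = (u, v)" "u < v" "v < k"
    using P0(1) by (auto simp: pairs_def)
  define W where "W = {..<k} - {v}"
  define e where "e w = c (min w v, max w v)" for w
  define A where "A x = (\<Prod>P\<in>pairs - pairs_containing v. chi (c P) (pair_diff P x))" for x
  let ?T = "\<lambda>x. \<Sum>t\<in>UNIV. \<Prod>w\<in>W. chi (e w) (t - x w)"
  have "norm (\<Sum>x\<in>tuples. \<Prod>P\<in>pairs. chi (c P) (pair_diff P x))
      = norm (\<Sum>x\<in>PiE W (\<lambda>_. UNIV). A x * ?T x)"
    using uv by (simp add: sum_PiE_split[of _ v] W_def A_def e_def prod_chi_pair_diff_fun_upd
        sum_distrib_left)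
  also have "\<dots> \<le> (\<Sum>x\<in>PiE W (\<lambda>_. UNIV). norm (?T x))"
  proof (rule order_trans[OF norm_sum sum_mono])
    fix x
    have "norm (A x) \<le> 1"
      unfolding A_def prod_norm[symmetric] by (rule prod_le_1) (auto simp: norm_chi_le)
    then show "norm (A x * ?T x) \<le> norm (?T x)"
      by (simp add: norm_mult mult_left_le_one_le)
  qed
  also have "\<dots> \<le> real CARD('a) ^ card W * sqrt (real CARD('a) + 1)"
  proof (rule sum_norm_sum_prod_chi_le)
    show "finite W" "u \<in> W"
      using uv by (auto simp: W_def)
    show "0 < e u"
      using uv P0 by (simp add: e_def)
    show "e w < m" if "w \<in> W" for w
      using c that uv by (auto simp: e_def W_def pairs_def min_def max_def)
    show "real (card W - 1) \<le> sqrt (real CARD('a) + 1)"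
      using k_minus_2_le_sqrt uv by (simp add: W_def)
  qed
  finally show ?thesis
    using uv by (simp add: W_def)
qed

lemma sum_prod_sum_chi_eq:
  "(\<Sum>x\<in>tuples. \<Prod>P\<in>pairs. \<Sum>j<m. chi j (pair_diff P x) * cnj (\<omega> ^ (j * \<sigma> P)))
    = (\<Sum>c\<in>PiE pairs (\<lambda>_. {..<m}). (\<Prod>P\<in>pairs. cnj (\<omega> ^ (c P * \<sigma> P)))
        * (\<Sum>x\<in>tuples. \<Prod>P\<in>pairs. chi (c P) (pair_diff P x)))"
  by (simp add: prod_sum_PiE[OF finite_pairs] sum.swap[of _ tuples] sum_distrib_left
      prod.distrib mult.commute)

definition has_difference_classes :: "(nat \<times> nat \<Rightarrow> nat) \<Rightarrow> (nat \<Rightarrow> 'a) \<Rightarrow> bool" where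
  "has_difference_classes \<sigma> x \<longleftrightarrow>
     (\<forall>P\<in>pairs. pair_diff P x \<noteq> 0 \<and> [dlog (pair_diff P x) = \<sigma> P] (mod m))"

lemma sum_prod_sum_chi_eq_card:
  "(\<Sum>x\<in>tuples. \<Prod>P\<in>pairs. \<Sum>j<m. chi j (pair_diff P x) * cnj (\<omega> ^ (j * \<sigma> P)))
    = of_nat (m ^ m * card {x \<in> tuples. has_difference_classes \<sigma> x})"
proof -
  have "(\<Prod>P\<in>pairs. \<Sum>j<m. chi j (pair_diff P x) * cnj (\<omega> ^ (j * \<sigma> P)))
      = (if has_difference_classes \<sigma> x then of_nat (m ^ m) else 0)" for x
  proof (cases "has_difference_classes \<sigma> x")
    case True
    then show ?thesis
      by (simp only: sum_chi_mult_cnj_omega) (simp add: card_pairs has_difference_classes_def)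
  next
    case False
    then show ?thesis
      by (simp only: sum_chi_mult_cnj_omega)
        (auto simp: prod_zero_iff finite_pairs has_difference_classes_def)
  qed
  then show ?thesis
    by (simp add: sum.If_cases finite_PiE Int_def)
qed

lemma sum_prod_chi_trivial:
  "(\<Sum>x\<in>tuples. \<Prod>P\<in>pairs. chi 0 (pair_diff P x)) = of_nat (card injective_tuples)"
proof -
  have "(\<Sum>x\<in>tuples. \<Prod>P\<in>pairs. chi 0 (pair_diff P x))
      = (\<Sum>x\<in>tuples. if x \<in> injective_tuples then 1 else 0)"
    by (intro sum.cong refl) (auto simp: chi_trivial injective_tuples_def prod_zero_iff finite_pairs)
  then show ?thesis
    by (simp add: sum.If_cases finite_PiE injective_tuples_def Int_def)
qed

lemma norm_sum_nontrivial_le: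
  assumes "\<And>c. norm (w c) \<le> 1"
  shows "norm (\<Sum>c\<in>PiE pairs (\<lambda>_. {..<m}) - {\<lambda>P\<in>pairs. 0}.
      w c * (\<Sum>x\<in>tuples. \<Prod>P\<in>pairs. chi (c P) (pair_diff P x)))
    \<le> (real m ^ m - 1) * (real CARD('a) ^ (k - 1) * sqrt (real CARD('a) + 1))"
proof -
  let ?C = "PiE pairs (\<lambda>_. {..<m}) - {\<lambda>P\<in>pairs. 0}"
  let ?B = "real CARD('a) ^ (k - 1) * sqrt (real CARD('a) + 1)"
  have "norm (w c * (\<Sum>x\<in>tuples. \<Prod>P\<in>pairs. chi (c P) (pair_diff P x))) \<le> ?B" if "c \<in> ?C" for c
  proof -
    have "\<exists>P\<in>pairs. c P \<noteq> 0"
    proof (rule ccontr)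
      assume "\<not> (\<exists>P\<in>pairs. c P \<noteq> 0)"
      then have "c = (\<lambda>P\<in>pairs. 0)"
        using that by (intro PiE_ext[of c pairs "\<lambda>_. {..<m}"]) auto
      then show False
        using that by simp
    qed
    then obtain P0 where "P0 \<in> pairs" "c P0 \<noteq> 0" ..
    have "norm (w c * (\<Sum>x\<in>tuples. \<Prod>P\<in>pairs. chi (c P) (pair_diff P x)))
        \<le> norm (\<Sum>x\<in>tuples. \<Prod>P\<in>pairs. chi (c P) (pair_diff P x))"
      using assms[of c] by (simp add: norm_mult mult_left_le_one_le)
    also have "\<dots> \<le> ?B"
      using that \<open>P0 \<in> pairs\<close> \<open>c P0 \<noteq> 0\<close> by (intro norm_sum_prod_chi_pair_diff_le) auto
    finally show ?thesis .
  qed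
  then have "norm (\<Sum>c\<in>?C. w c * (\<Sum>x\<in>tuples. \<Prod>P\<in>pairs. chi (c P) (pair_diff P x)))
      \<le> (\<Sum>c\<in>?C. ?B)"
    by (intro order_trans[OF norm_sum sum_mono])
  also have "\<dots> = (real m ^ m - 1) * ?B"
    using m_pos by (simp add: card_Diff_singleton finite_PiE finite_pairs card_PiE card_pairs of_nat_diff)
  finally show ?thesis .
qed

lemma error_lt_main_term:
  "(real m ^ m - 1) * (real CARD('a) ^ (k - 1) * sqrt (real CARD('a) + 1))
    < real CARD('a) ^ k - m * real CARD('a) ^ (k - 1)"
proof -
  have "3 * real m \<le> real m * real m"
    using k_le_m k_ge_3 by (intro mult_right_mono) auto
  then have "real m + 1 \<le> real m ^ 2"
    unfolding power2_eq_square using k_le_m k_ge_3 by linarith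
  also have "\<dots> \<le> real m ^ m"
    using k_le_m k_ge_3 by (intro power_increasing) auto
  finally have "(real m ^ m - 1) * sqrt (real CARD('a) + 1) < real CARD('a) - m"
    using card_large by (intro minus_one_mult_sqrt_less) (simp_all flip: of_nat_power)
  then have "real CARD('a) ^ (k - 1) * ((real m ^ m - 1) * sqrt (real CARD('a) + 1))
      < real CARD('a) ^ (k - 1) * (real CARD('a) - m)"
    by (intro mult_strict_left_mono) auto
  moreover have "real CARD('a) ^ k = real CARD('a) ^ (k - 1) * real CARD('a)"
    using k_ge_3 by (cases k) (simp_all add: mult.commute)
  ultimately show ?thesis
    by (simp add: algebra_simps)
qed

lemma exists_tuple_with_difference_classes: "\<exists>x\<in>tuples. has_difference_classes \<sigma> x"
proof (rule ccontr)
  assume "\<not> ?thesis"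
  then have "{x \<in> tuples. has_difference_classes \<sigma> x} = {}"
    by blast
  define c0 where "c0 = (\<lambda>P\<in>pairs. 0 :: nat)"
  define wt where "wt c = (\<Prod>P\<in>pairs. cnj (\<omega> ^ (c P * \<sigma> P)))" for c
  define S where "S c = (\<Sum>x\<in>tuples. \<Prod>P\<in>pairs. chi (c P) (pair_diff P x))" for c
  have c0: "c0 \<in> PiE pairs (\<lambda>_. {..<m})" "wt c0 = 1" "S c0 = of_nat (card injective_tuples)"
    using m_pos sum_prod_chi_trivial by (auto simp: c0_def wt_def S_def cong: prod.cong)
  have "of_nat (card injective_tuples) + (\<Sum>c\<in>PiE pairs (\<lambda>_. {..<m}) - {c0}. wt c * S c)
      = (\<Sum>c\<in>PiE pairs (\<lambda>_. {..<m}). wt c * S c)"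
    using c0 by (simp add: sum.remove finite_PiE finite_pairs)
  also have "\<dots> = 0"
    unfolding wt_def S_def sum_prod_sum_chi_eq[symmetric] sum_prod_sum_chi_eq_card
      \<open>{x \<in> tuples. has_difference_classes \<sigma> x} = {}\<close> by simp
  finally have "of_nat (card injective_tuples) = - (\<Sum>c\<in>PiE pairs (\<lambda>_. {..<m}) - {c0}. wt c * S c)"
    by (simp add: eq_neg_iff_add_eq_0)
  from arg_cong[where f = norm, OF this]
  have "real (card injective_tuples) = norm (\<Sum>c\<in>PiE pairs (\<lambda>_. {..<m}) - {c0}. wt c * S c)"
    by simp
  also have "\<dots> \<le> (real m ^ m - 1) * (real CARD('a) ^ (k - 1) * sqrt (real CARD('a) + 1))"
    unfolding c0_def S_def
    by (rule norm_sum_nontrivial_le) (simp add: wt_def prod_norm[symmetric] norm_power)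
  also have "\<dots> < real CARD('a) ^ k - m * real CARD('a) ^ (k - 1)"
    by (rule error_lt_main_term)
  finally show False
    using card_injective_tuples_ge by linarith
qed

lemma cong_dlog_uminus:
  assumes "u \<noteq> 0" shows "[dlog (- u) = dlog u + m] (mod 2 * m)"
proof -
  have "[dlog (- 1 * u) = dlog (- 1) + dlog u] (mod CARD('a) - 1)"
    using assms by (intro cong_dlog_mult) auto
  moreover have "even (CARD('a) - 1)"
    using card_units by simp
  then have "[dlog (- 1) + dlog u = m * n + dlog u] (mod CARD('a) - 1)"
    using cong_dlog_minus_one card_units by (intro cong_add) auto
  ultimately have "[dlog (- u) = m * n + dlog u] (mod 2 * m)"
    using card_units by (metis cong_dvd_modulus_nat cong_trans dvd_triv_left mult_minus1)
  moreover have "[m * n = m] (mod 2 * m)"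
    using odd_n by (auto simp: cong_def elim!: oddE)
  ultimately show ?thesis
    by (metis add.commute cong_add_rcancel_nat cong_trans)
qed

end

section \<open>Base blocks\<close>

definition differences_in_distinct_cosets :: "'a::field set \<Rightarrow> 'a set \<Rightarrow> bool" where
  "differences_in_distinct_cosets H B \<longleftrightarrow>
     (\<forall>a\<in>B. \<forall>b\<in>B. \<forall>a'\<in>B. \<forall>b'\<in>B. a \<noteq> b \<longrightarrow> a' \<noteq> b' \<longrightarrow> (a - b) / (a' - b') \<in> H \<longrightarrow> a = a' \<and> b = b')"

context prescribed_differences
begin

lemma min_max_in_pairs: "i < k \<Longrightarrow> j < k \<Longrightarrow> i \<noteq> j \<Longrightarrow> (min i j, max i j) \<in> pairs"
  by (auto simp: pairs_def min_def max_def)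

text \<open>Since \<open>-1\<close> has discrete logarithm \<open>m\<close> modulo \<open>2 * m\<close>, the class of \<open>x i - x j\<close>
  modulo \<open>m\<close> does not depend on the orientation of the pair.\<close>
lemma cong_dlog_tuple_diff:
  assumes x: "has_difference_classes \<sigma> x" and ij: "i < k" "j < k" "i \<noteq> j"
  shows "x i \<noteq> x j \<and> [dlog (x i - x j) = \<sigma> (min i j, max i j)] (mod m)"
proof -
  let ?u = "pair_diff (min i j, max i j) x"
  have u: "?u \<noteq> 0" "[dlog ?u = \<sigma> (min i j, max i j)] (mod m)"
    using x min_max_in_pairs[OF ij] by (auto simp: has_difference_classes_def)
  show ?thesis
  proof (cases "i < j")
    case True
    then have "x i - x j = - ?u"
      by (simp add: pair_diff_def)
    moreover have "[dlog (- ?u) = dlog ?u + m] (mod m)"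
      using cong_dlog_uminus[OF u(1)] by (rule cong_dvd_modulus_nat) simp
    ultimately show ?thesis
      using u by (auto simp: cong_def)
  next
    case False
    then have "x i - x j = ?u"
      using ij by (simp add: pair_diff_def)
    then show ?thesis
      using u by (metis eq_iff_diff_eq_0)
  qed
qed

lemma tuple_indices_eq_if_cong_dlog:
  assumes x: "has_difference_classes \<sigma> x" and \<sigma>: "inj_on \<sigma> pairs" "\<sigma> ` pairs \<subseteq> {..<m}"
    and ij: "i < k" "j < k" "i \<noteq> j" "i' < k" "j' < k" "i' \<noteq> j'"
    and cong: "[dlog (x i - x j) = dlog (x i' - x j')] (mod 2 * m)"
  shows "i = i' \<and> j = j'"
proof -
  have "[dlog (x i - x j) = dlog (x i' - x j')] (mod m)"
    using cong by (rule cong_dvd_modulus_nat) simp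
  then have "[\<sigma> (min i j, max i j) = \<sigma> (min i' j', max i' j')] (mod m)"
    using cong_dlog_tuple_diff[OF x ij(1-3)] cong_dlog_tuple_diff[OF x ij(4-6)] cong_sym cong_trans
    by blast
  then have "\<sigma> (min i j, max i j) = \<sigma> (min i' j', max i' j')"
    using \<sigma>(2) min_max_in_pairs ij by (intro cong_less_modulus_unique_nat) auto
  then have "(min i j, max i j) = (min i' j', max i' j')"
    using \<sigma>(1) min_max_in_pairs ij by (auto dest: inj_onD)
  then consider "i = i'" "j = j'" | "i = j'" "j = i'"
    by (auto simp: min_def max_def split: if_splits)
  then show ?thesis
  proof cases
    case 2
    then have "x i' - x j' = - (x i - x j)"
      by simp
    with cong have swap: "[dlog (x i - x j) = dlog (- (x i - x j))] (mod 2 * m)"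
      by simp
    have "x i - x j \<noteq> 0"
      using cong_dlog_tuple_diff[OF x ij(1-3)] by simp
    from cong_trans[OF swap cong_dlog_uminus[OF this]]
    have "[dlog (x i - x j) + 0 = dlog (x i - x j) + m] (mod 2 * m)"
      by simp
    then have "[m = 0] (mod 2 * m)"
      by (simp only: cong_add_lcancel_nat cong_sym_eq)
    then show ?thesis
      using m_pos by (simp add: cong_def)
  qed simp
qed

lemma exists_base_block:
  "\<exists>B. card B = k \<and> (\<forall>a\<in>B. \<forall>b\<in>B. \<forall>a'\<in>B. \<forall>b'\<in>B. a \<noteq> b \<longrightarrow> a' \<noteq> b' \<longrightarrow>
      [dlog (a - b) = dlog (a' - b')] (mod 2 * m) \<longrightarrow> a = a' \<and> b = b')"
proof -
  obtain \<sigma> where \<sigma>: "bij_betw \<sigma> pairs {..<m}"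
    using bij_betw_iff_card[of pairs "{..<m}"] finite_pairs card_pairs by auto
  then have \<sigma>': "inj_on \<sigma> pairs" "\<sigma> ` pairs \<subseteq> {..<m}"
    by (auto simp: bij_betw_def)
  obtain x where "x \<in> tuples" and x: "has_difference_classes \<sigma> x"
    using exists_tuple_with_difference_classes[of \<sigma>] ..
  have "inj_on x {..<k}"
    using cong_dlog_tuple_diff[OF x] by (auto simp: inj_on_def)
  then have "card (x ` {..<k}) = k"
    by (simp add: card_image)
  moreover have "a = a' \<and> b = b'"
    if mem: "a \<in> x ` {..<k}" "b \<in> x ` {..<k}" "a' \<in> x ` {..<k}" "b' \<in> x ` {..<k}"
      and ne: "a \<noteq> b" "a' \<noteq> b'" and cong: "[dlog (a - b) = dlog (a' - b')] (mod 2 * m)"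
    for a b a' b'
  proof -
    obtain i j i' j' where "i < k" "j < k" "i' < k" "j' < k"
      and "a = x i" "b = x j" "a' = x i'" "b' = x j'"
      using mem by blast
    then show ?thesis
      using ne cong tuple_indices_eq_if_cong_dlog[OF x \<sigma>', of i j i' j'] by auto
  qed
  ultimately show ?thesis
    by blast
qed

lemma exists_base_block_for_subgroup:
  fixes H :: "'a set"
  assumes "mult_subgroup H" "card H = n"
  shows "\<exists>B. card B = k \<and> differences_in_distinct_cosets H B"
proof -
  obtain B where card_B: "card B = k" and B: "\<forall>a\<in>B. \<forall>b\<in>B. \<forall>a'\<in>B. \<forall>b'\<in>B. a \<noteq> b \<longrightarrow> a' \<noteq> b' \<longrightarrow>
      [dlog (a - b) = dlog (a' - b')] (mod 2 * m) \<longrightarrow> a = a' \<and> b = b'"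
    using exists_base_block by (elim exE conjE)
  have "a = a' \<and> b = b'"
    if ab: "a \<in> B" "b \<in> B" "a' \<in> B" "b' \<in> B" "a \<noteq> b" "a' \<noteq> b'" and "(a - b) / (a' - b') \<in> H"
    for a b a' b'
  proof -
    define h where "h = (a - b) / (a' - b')"
    have "a - b = h * (a' - b')" "h \<noteq> 0"
      using ab by (auto simp: h_def)
    then have "[dlog (a - b) = dlog h + dlog (a' - b')] (mod CARD('a) - 1)"
      using ab cong_dlog_mult[of h "a' - b'"] by simp
    then have "[dlog (a - b) = dlog h + dlog (a' - b')] (mod 2 * m)"
      using two_m_dvd_card_units by (rule cong_dvd_modulus_nat)
    moreover have "2 * m dvd dlog h"
      using dvd_dlog_subgroup[OF assms(1), of "2 * m"] \<open>(a - b) / (a' - b') \<in> H\<close> card_units assms(2)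
      by (simp add: h_def)
    then have "[dlog h + dlog (a' - b') = 0 + dlog (a' - b')] (mod 2 * m)"
      by (intro cong_add) (simp_all add: cong_0_iff)
    ultimately have "[dlog (a - b) = 0 + dlog (a' - b')] (mod 2 * m)"
      by (rule cong_trans)
    then have "[dlog (a - b) = dlog (a' - b')] (mod 2 * m)"
      by simp
    then show ?thesis
      using B ab by blast
  qed
  then show ?thesis
    unfolding differences_in_distinct_cosets_def using card_B by blast
qed

end

lemma card_off_diagonal:
  assumes "finite B" shows "card {(a, b) \<in> B \<times> B. a \<noteq> b} = card B * (card B - 1)"
proof -
  have "{(a, b) \<in> B \<times> B. a \<noteq> b} = B \<times> B - (\<lambda>a. (a, a)) ` B"
    by auto
  then have "card {(a, b) \<in> B \<times> B. a \<noteq> b} = card B * card B - card B"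
    using assms by (simp add: card_Diff_subset card_cartesian_product card_image inj_on_def subset_eq)
  then show ?thesis
    by (simp add: diff_mult_distrib2)
qed

lemma (in mult_subgroup) differences_cover_cosets:
  assumes card_B: "card B = k" and distinct: "differences_in_distinct_cosets H B"
    and card_units: "CARD('a) - 1 = k * (k - 1) * card H" and "\<delta> \<noteq> 0"
  shows "\<exists>a\<in>B. \<exists>b\<in>B. a \<noteq> b \<and> \<delta> / (a - b) \<in> H"
proof -
  define OP where "OP = {(a, b) \<in> B \<times> B. a \<noteq> b}"
  define coset where "coset p = (\<lambda>h. (fst p - snd p) * h) ` H" for p
  have "card OP = k * (k - 1)"
    using card_off_diagonal[of B] card_B by (simp add: OP_def)
  have card_coset: "card (coset p) = card H" if "p \<in> OP" for p
    using that by (auto simp: coset_def OP_def inj_on_def intro!: card_image)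
  have disjoint: "coset p \<inter> coset p' = {}" if in_OP: "p \<in> OP" "p' \<in> OP" and "p \<noteq> p'" for p p'
  proof (rule ccontr)
    assume "coset p \<inter> coset p' \<noteq> {}"
    then obtain h h' where hh: "h \<in> H" "h' \<in> H" "(fst p - snd p) * h = (fst p' - snd p') * h'"
      by (auto simp: coset_def)
    obtain a b a' b' where p: "p = (a, b)" "p' = (a', b')" "a \<in> B" "b \<in> B" "a' \<in> B" "b' \<in> B"
      "a \<noteq> b" "a' \<noteq> b'"
      using in_OP by (auto simp: OP_def)
    then have "(a - b) / (a' - b') = h' / h"
      using hh(3) nonzero[OF hh(1)] by (simp add: field_simps)
    then have "a = a' \<and> b = b'"
      using distinct p divide_closed[OF hh(2,1)]
      unfolding differences_in_distinct_cosets_def by metis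
    then show False
      using \<open>p \<noteq> p'\<close> p by simp
  qed
  have "card (\<Union>p\<in>OP. coset p) = (\<Sum>p\<in>OP. card (coset p))"
    using disjoint by (intro card_UN_disjoint) (auto simp: OP_def)
  also have "\<dots> = card (- {0::'a})"
    using card_coset \<open>card OP = k * (k - 1)\<close> card_units
    by (simp add: Compl_eq_Diff_UNIV card_Diff_singleton)
  finally have "(\<Union>p\<in>OP. coset p) = - {0}"
    using zero_notin by (intro card_subset_eq) (auto simp: coset_def OP_def)
  then obtain p h where "p \<in> OP" "h \<in> H" "\<delta> = (fst p - snd p) * h"
    using \<open>\<delta> \<noteq> 0\<close> unfolding coset_def by blast
  then have "fst p \<in> B" "snd p \<in> B" "fst p \<noteq> snd p" "\<delta> / (fst p - snd p) = h"
    by (auto simp: OP_def)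
  then show ?thesis
    using \<open>h \<in> H\<close> by metis
qed

section \<open>The affine design and its partial difference set\<close>

definition aff_apply :: "'a::field \<times> 'a \<Rightarrow> 'a \<Rightarrow> 'a" where
  "aff_apply h z = fst h * z + snd h"

lemma carrier_affine_group: "carrier (affine_group H) = {(a, b). a \<in> H}"
  by (simp add: affine_group_def)

lemma mult_affine_group: "x \<otimes>\<^bsub>affine_group H\<^esub> y = (fst x * fst y, fst x * snd y + snd x)"
  by (simp add: affine_group_def case_prod_unfold)

lemma one_affine_group: "\<one>\<^bsub>affine_group H\<^esub> = (1, 0)"
  by (simp add: affine_group_def)

lemma aff_apply_mult: "aff_apply (x \<otimes>\<^bsub>affine_group H\<^esub> y) z = aff_apply x (aff_apply y z)"
  by (simp add: aff_apply_def mult_affine_group algebra_simps)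

lemma aff_apply_one [simp]: "aff_apply \<one>\<^bsub>affine_group H\<^esub> z = z"
  by (simp add: aff_apply_def one_affine_group)

lemma (in mult_subgroup) group_affine_group: "group (affine_group H)"
proof (rule groupI)
  fix x y z
  show "x \<otimes>\<^bsub>affine_group H\<^esub> y \<otimes>\<^bsub>affine_group H\<^esub> z
      = x \<otimes>\<^bsub>affine_group H\<^esub> (y \<otimes>\<^bsub>affine_group H\<^esub> z)"
    by (simp add: mult_affine_group algebra_simps)
  show "\<one>\<^bsub>affine_group H\<^esub> \<otimes>\<^bsub>affine_group H\<^esub> x = x"
    by (simp add: mult_affine_group one_affine_group)
  assume x: "x \<in> carrier (affine_group H)"
  then show "\<exists>y\<in>carrier (affine_group H). y \<otimes>\<^bsub>affine_group H\<^esub> x = \<one>\<^bsub>affine_group H\<^esub>"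
    using nonzero inverse_closed
    by (intro bexI[of _ "(inverse (fst x), - snd x / fst x)"])
      (auto simp: carrier_affine_group mult_affine_group one_affine_group field_simps)
  assume "y \<in> carrier (affine_group H)"
  with x show "x \<otimes>\<^bsub>affine_group H\<^esub> y \<in> carrier (affine_group H)"
    by (auto simp: carrier_affine_group mult_affine_group mult_closed)
qed (simp add: carrier_affine_group one_affine_group one_in)

locale affine_base_block = mult_subgroup H for H :: "'a::{field,finite} set" +
  fixes B :: "'a set" and k :: nat
  assumes card_B: "card B = k"
    and distinct_cosets: "differences_in_distinct_cosets H B"
    and covers_cosets: "\<delta> \<noteq> 0 \<Longrightarrow> \<exists>a\<in>B. \<exists>b\<in>B. a \<noteq> b \<and> \<delta> / (a - b) \<in> H"
begin

abbreviation G where "G \<equiv> affine_group H"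

sublocale G: group G
  by (rule group_affine_group)

definition block :: "'a \<times> 'a \<Rightarrow> 'a set" where "block h = aff_apply h ` B"

lemma block_one [simp]: "block \<one>\<^bsub>G\<^esub> = B"
  by (simp add: block_def)

lemma block_mult: "block (x \<otimes>\<^bsub>G\<^esub> y) = aff_apply x ` block y"
  by (simp add: block_def image_image aff_apply_mult)

lemma inj_aff_apply: "h \<in> carrier G \<Longrightarrow> inj (aff_apply h)"
  by (auto simp: inj_on_def aff_apply_def carrier_affine_group dest: nonzero)

lemma card_block: "h \<in> carrier G \<Longrightarrow> card (block h) = k"
  by (simp add: block_def card_image inj_on_subset[OF inj_aff_apply] card_B)

lemma exists_block_through:
  assumes "u \<noteq> w" shows "\<exists>h\<in>carrier G. u \<in> block h \<and> w \<in> block h"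
proof -
  obtain a b where ab: "a \<in> B" "b \<in> B" "a \<noteq> b" "(u - w) / (a - b) \<in> H"
    using covers_cosets[of "u - w"] assms by auto
  define \<alpha> where "\<alpha> = (u - w) / (a - b)"
  define h where "h = (\<alpha>, u - \<alpha> * a)"
  have "\<alpha> * (a - b) = u - w"
    using ab by (simp add: \<alpha>_def)
  then have "aff_apply h a = u" "aff_apply h b = w"
    by (simp_all add: aff_apply_def h_def algebra_simps)
  moreover have "h \<in> carrier G"
    using ab by (simp add: carrier_affine_group h_def \<alpha>_def)
  ultimately show ?thesis
    using ab unfolding block_def by blast
qed

lemma block_through_unique:
  assumes "h \<in> carrier G" "h' \<in> carrier G" "u \<noteq> w"
    and "u \<in> block h" "w \<in> block h" "u \<in> block h'" "w \<in> block h'"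
  shows "h = h'"
proof -
  obtain a b a' b' where ab: "a \<in> B" "b \<in> B" "a' \<in> B" "b' \<in> B"
    and u: "u = aff_apply h a" "u = aff_apply h' a'" and w: "w = aff_apply h b" "w = aff_apply h' b'"
    using assms(4-7) unfolding block_def by blast
  have H: "fst h \<in> H" "fst h' \<in> H"
    using assms(1,2) by (auto simp: carrier_affine_group)
  have diff: "u - w = fst h * (a - b)"
    using u(1) w(1) by (simp add: aff_apply_def algebra_simps)
  have diff': "u - w = fst h' * (a' - b')"
    using u(2) w(2) by (simp add: aff_apply_def algebra_simps)
  have "a \<noteq> b" "a' \<noteq> b'"
    using diff diff' assms(3) by auto
  moreover have "(a - b) / (a' - b') = fst h' / fst h"
    using diff diff' H \<open>a' \<noteq> b'\<close> nonzero by (simp add: field_simps)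
  ultimately have "a = a' \<and> b = b'"
    using distinct_cosets ab divide_closed[OF H(2,1)]
    unfolding differences_in_distinct_cosets_def by metis
  then have "fst h = fst h'"
    using diff diff' \<open>a \<noteq> b\<close> by simp
  moreover have "snd h = snd h'"
    using u \<open>a = a' \<and> b = b'\<close> calculation by (simp add: aff_apply_def)
  ultimately show ?thesis
    by (simp add: prod_eq_iff)
qed

lemma eq_one_if_two_points_in_base:
  assumes "h \<in> carrier G" "u \<noteq> w" "u \<in> block h" "w \<in> block h" "u \<in> B" "w \<in> B"
  shows "h = \<one>\<^bsub>G\<^esub>"
  using block_through_unique[OF assms(1) G.one_closed assms(2-4)] assms(5,6) by simp

definition block_through :: "'a \<Rightarrow> 'a \<Rightarrow> 'a \<times> 'a" where
  "block_through u w = (THE h. h \<in> carrier G \<and> u \<in> block h \<and> w \<in> block h)"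

lemma block_through:
  assumes "u \<noteq> w"
  shows "block_through u w \<in> carrier G" "u \<in> block (block_through u w)" "w \<in> block (block_through u w)"
proof -
  have "\<exists>!h. h \<in> carrier G \<and> u \<in> block h \<and> w \<in> block h"
    using exists_block_through[OF assms] block_through_unique[OF _ _ assms] by blast
  then have "block_through u w \<in> carrier G \<and> u \<in> block (block_through u w) \<and> w \<in> block (block_through u w)"
    unfolding block_through_def by (rule theI')
  then show "block_through u w \<in> carrier G" "u \<in> block (block_through u w)" "w \<in> block (block_through u w)"
    by auto
qed

lemma block_through_eq:
  "u \<noteq> w \<Longrightarrow> h \<in> carrier G \<Longrightarrow> u \<in> block h \<Longrightarrow> w \<in> block h \<Longrightarrow> block_through u w = h"
  using block_through block_through_unique by blast

lemma card_blocks_containing: "card {h \<in> carrier G. z \<in> block h} = k * card H"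
proof -
  have "{h \<in> carrier G. z \<in> block h} = (\<lambda>(a, \<alpha>). (\<alpha>, z - \<alpha> * a)) ` (B \<times> H)"
    by (force simp: carrier_affine_group block_def aff_apply_def image_iff)
  moreover have "inj_on (\<lambda>(a, \<alpha>). (\<alpha>, z - \<alpha> * a)) (B \<times> H)"
    by (auto simp: inj_on_def dest: nonzero)
  ultimately show ?thesis
    by (simp add: card_image card_cartesian_product card_B)
qed


definition D :: "('a \<times> 'a) set" where
  "D = {h \<in> carrier G. h \<noteq> \<one>\<^bsub>G\<^esub> \<and> block h \<inter> B \<noteq> {}}"

lemma finite_carrier: "finite (carrier G)"
  by (rule finite_subset[of _ UNIV]) auto

lemma card_carrier: "card (carrier G) = card H * CARD('a)"
proof -
  have "carrier G = H \<times> UNIV"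
    by (auto simp: carrier_affine_group)
  then show ?thesis
    by (simp add: card_cartesian_product)
qed

lemma card_D: "card D = k * (k * card H - 1)"
proof -
  define F where "F z = {h \<in> carrier G. z \<in> block h} - {\<one>\<^bsub>G\<^esub>}" for z
  have "D = (\<Union>z\<in>B. F z)"
    by (auto simp: D_def F_def)
  also have "card \<dots> = (\<Sum>z\<in>B. card (F z))"
    using eq_one_if_two_points_in_base by (intro card_UN_disjoint) (auto simp: F_def finite_carrier)
  also have "\<dots> = (\<Sum>z\<in>B. k * card H - 1)"
    using card_blocks_containing by (intro sum.cong) (simp_all add: F_def card_Diff_singleton finite_carrier)
  finally show ?thesis
    using card_B by simp
qed

lemma aff_apply_inv: "h \<in> carrier G \<Longrightarrow> aff_apply (inv\<^bsub>G\<^esub> h) (aff_apply h z) = z"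
  by (metis aff_apply_mult aff_apply_one G.l_inv)

lemma block_inv_Int:
  assumes "h \<in> carrier G"
  shows "block (inv\<^bsub>G\<^esub> h) \<inter> block y = aff_apply (inv\<^bsub>G\<^esub> h) ` (B \<inter> block (h \<otimes>\<^bsub>G\<^esub> y))"
proof -
  have "block (inv\<^bsub>G\<^esub> h) = aff_apply (inv\<^bsub>G\<^esub> h) ` B"
    by (simp add: block_def)
  moreover have "block y = aff_apply (inv\<^bsub>G\<^esub> h) ` block (h \<otimes>\<^bsub>G\<^esub> y)"
    using assms by (simp add: block_mult image_image aff_apply_inv)
  ultimately show ?thesis
    using inj_aff_apply[of "inv\<^bsub>G\<^esub> h"] assms by (simp add: image_Int)
qed

lemma block_inv_meets_base_iff:
  "h \<in> carrier G \<Longrightarrow> block (inv\<^bsub>G\<^esub> h) \<inter> B \<noteq> {} \<longleftrightarrow> block h \<inter> B \<noteq> {}"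
  using block_inv_Int[of h "\<one>\<^bsub>G\<^esub>"] by auto

lemma inv_D: "(\<lambda>x. inv\<^bsub>G\<^esub> x) ` D = D"
proof -
  have inv_in_D: "inv\<^bsub>G\<^esub> h \<in> D" if "h \<in> D" for h
    using that block_inv_meets_base_iff[of h] G.inv_eq_1_iff by (auto simp: D_def)
  have "h \<in> (\<lambda>x. inv\<^bsub>G\<^esub> x) ` D" if "h \<in> D" for h
  proof (rule image_eqI)
    show "h = inv\<^bsub>G\<^esub> (inv\<^bsub>G\<^esub> h)"
      using that by (simp add: D_def)
  qed (rule inv_in_D[OF that])
  then show ?thesis
    using inv_in_D by blast
qed

lemma D_subset: "D \<subseteq> carrier G"
  by (auto simp: D_def)

lemma quotient_pairs_eq_image:
  assumes g: "g \<in> carrier G"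
  shows "{(x, y). x \<in> D \<and> y \<in> D \<and> x \<otimes>\<^bsub>G\<^esub> inv\<^bsub>G\<^esub> y = g}
    = (\<lambda>y. (g \<otimes>\<^bsub>G\<^esub> y, y)) ` {y \<in> D. g \<otimes>\<^bsub>G\<^esub> y \<in> D}"
proof (intro equalityI subsetI)
  fix p assume "p \<in> {(x, y). x \<in> D \<and> y \<in> D \<and> x \<otimes>\<^bsub>G\<^esub> inv\<^bsub>G\<^esub> y = g}"
  then obtain x y where p: "p = (x, y)" "x \<in> D" "y \<in> D" "x \<otimes>\<^bsub>G\<^esub> inv\<^bsub>G\<^esub> y = g"
    by (cases p) simp
  then have xy: "x \<in> carrier G" "y \<in> carrier G"
    using D_subset by auto
  have x: "x = g \<otimes>\<^bsub>G\<^esub> y"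
    by (rule G.inv_solve_right'[OF g xy, THEN iffD1, OF p(4)])
  show "p \<in> (\<lambda>y. (g \<otimes>\<^bsub>G\<^esub> y, y)) ` {y \<in> D. g \<otimes>\<^bsub>G\<^esub> y \<in> D}"
  proof (rule image_eqI)
    show "p = (g \<otimes>\<^bsub>G\<^esub> y, y)"
      using p(1) x by simp
    show "y \<in> {y \<in> D. g \<otimes>\<^bsub>G\<^esub> y \<in> D}"
      using p(2,3) x by simp
  qed
next
  fix p assume "p \<in> (\<lambda>y. (g \<otimes>\<^bsub>G\<^esub> y, y)) ` {y \<in> D. g \<otimes>\<^bsub>G\<^esub> y \<in> D}"
  then obtain y where p: "p = (g \<otimes>\<^bsub>G\<^esub> y, y)" "y \<in> D" "g \<otimes>\<^bsub>G\<^esub> y \<in> D"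
    by auto
  then have y: "y \<in> carrier G"
    using D_subset by auto
  have "g \<otimes>\<^bsub>G\<^esub> y \<otimes>\<^bsub>G\<^esub> inv\<^bsub>G\<^esub> y = g"
    by (rule G.inv_solve_right'[OF g G.m_closed[OF g y] y, THEN iffD2, OF refl])
  then show "p \<in> {(x, y). x \<in> D \<and> y \<in> D \<and> x \<otimes>\<^bsub>G\<^esub> inv\<^bsub>G\<^esub> y = g}"
    using p by simp
qed

lemma card_quotient_pairs:
  assumes g: "g \<in> carrier G"
  shows "card {(x, y). x \<in> D \<and> y \<in> D \<and> x \<otimes>\<^bsub>G\<^esub> inv\<^bsub>G\<^esub> y = g}
    = card {y \<in> D. y \<noteq> inv\<^bsub>G\<^esub> g \<and> block y \<inter> block (inv\<^bsub>G\<^esub> g) \<noteq> {}}"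
proof -
  note quotient_pairs_eq_image[OF g]
  moreover have "{y \<in> D. g \<otimes>\<^bsub>G\<^esub> y \<in> D}
      = {y \<in> D. y \<noteq> inv\<^bsub>G\<^esub> g \<and> block y \<inter> block (inv\<^bsub>G\<^esub> g) \<noteq> {}}"
  proof (intro Collect_cong conj_cong refl)
    fix y assume "y \<in> D"
    then have y: "y \<in> carrier G"
      using D_subset by blast
    have "g \<otimes>\<^bsub>G\<^esub> y = \<one>\<^bsub>G\<^esub> \<longleftrightarrow> y = inv\<^bsub>G\<^esub> g"
      using G.inv_solve_left'[OF y g G.one_closed] g by auto
    moreover have "block (g \<otimes>\<^bsub>G\<^esub> y) \<inter> B \<noteq> {} \<longleftrightarrow> block y \<inter> block (inv\<^bsub>G\<^esub> g) \<noteq> {}"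
      using block_inv_Int[OF g, of y] by auto
    ultimately show "g \<otimes>\<^bsub>G\<^esub> y \<in> D \<longleftrightarrow> y \<noteq> inv\<^bsub>G\<^esub> g \<and> block y \<inter> block (inv\<^bsub>G\<^esub> g) \<noteq> {}"
      using g y unfolding D_def by blast
  qed
  moreover have "inj_on (\<lambda>y. (g \<otimes>\<^bsub>G\<^esub> y, y)) {y \<in> D. g \<otimes>\<^bsub>G\<^esub> y \<in> D}"
    by (auto simp: inj_on_def)
  ultimately show ?thesis
    by (simp add: card_image)
qed


lemma blocks_meeting_eq_image:
  assumes "S \<inter> T = {}"
  shows "{y \<in> carrier G. block y \<inter> S \<noteq> {} \<and> block y \<inter> T \<noteq> {}}
    = (\<lambda>(u, w). block_through u w) ` (S \<times> T)"
proof (intro equalityI subsetI)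
  fix y assume "y \<in> {y \<in> carrier G. block y \<inter> S \<noteq> {} \<and> block y \<inter> T \<noteq> {}}"
  then obtain u w where "y \<in> carrier G" "u \<in> block y" "u \<in> S" "w \<in> block y" "w \<in> T"
    by blast
  moreover have "u \<noteq> w"
    using assms \<open>u \<in> S\<close> \<open>w \<in> T\<close> by blast
  ultimately show "y \<in> (\<lambda>(u, w). block_through u w) ` (S \<times> T)"
    using block_through_eq by (intro image_eqI[of _ _ "(u, w)"]) auto
next
  fix y assume "y \<in> (\<lambda>(u, w). block_through u w) ` (S \<times> T)"
  then obtain u w where "u \<in> S" "w \<in> T" "y = block_through u w"
    by auto
  moreover have "u \<noteq> w"
    using assms \<open>u \<in> S\<close> \<open>w \<in> T\<close> by blast
  ultimately show "y \<in> {y \<in> carrier G. block y \<inter> S \<noteq> {} \<and> block y \<inter> T \<noteq> {}}"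
    using block_through by blast
qed

text \<open>A block through two points of \<open>S \<subseteq> block h1\<close> is \<open>block h1\<close>, which misses \<open>T\<close>.\<close>
lemma inj_on_block_through:
  assumes h: "h1 \<in> carrier G" "h2 \<in> carrier G"
    and S: "S \<subseteq> block h1" "S \<inter> block h2 = {}" and T: "T \<subseteq> block h2" "T \<inter> block h1 = {}"
  shows "inj_on (\<lambda>(u, w). block_through u w) (S \<times> T)"
proof (rule inj_onI, clarify)
  fix u w u' w' assume uw: "u \<in> S" "w \<in> T" "u' \<in> S" "w' \<in> T"
    and eq: "block_through u w = block_through u' w'"
  have ne: "u \<noteq> w" "u' \<noteq> w'"
    using uw S T by auto
  let ?y = "block_through u w"
  have y: "?y \<in> carrier G" "u \<in> block ?y" "w \<in> block ?y" "u' \<in> block ?y" "w' \<in> block ?y"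
    using block_through[OF ne(1)] block_through[OF ne(2)] eq by auto
  show "u = u' \<and> w = w'"
  proof (intro conjI; rule ccontr)
    assume "u \<noteq> u'"
    then have "?y = h1"
      using block_through_unique[OF y(1) h(1) _ y(2,4)] uw S by blast
    then show False
      using y(3) uw T by blast
  next
    assume "w \<noteq> w'"
    then have "?y = h2"
      using block_through_unique[OF y(1) h(2) _ y(3,5)] uw T by blast
    then show False
      using y(2) uw S by blast
  qed
qed

lemma card_blocks_meeting_both:
  assumes "h1 \<in> carrier G" "h2 \<in> carrier G"
    and "S \<subseteq> block h1" "S \<inter> block h2 = {}" "T \<subseteq> block h2" "T \<inter> block h1 = {}"
  shows "card {y \<in> carrier G. block y \<inter> S \<noteq> {} \<and> block y \<inter> T \<noteq> {}} = card S * card T"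
proof -
  have "S \<inter> T = {}"
    using assms by blast
  then show ?thesis
    using inj_on_block_through[OF assms]
    by (simp add: blocks_meeting_eq_image card_image card_cartesian_product)
qed

lemma base_Int_block_eq_singleton:
  assumes "e \<in> carrier G" "e \<noteq> \<one>\<^bsub>G\<^esub>" "z \<in> B \<inter> block e"
  shows "B \<inter> block e = {z}"
  using assms eq_one_if_two_points_in_base[OF assms(1)] by blast

text \<open>A block meeting both \<open>B\<close> and \<open>block e\<close> either passes through their (at most one)
  common point, or meets them in two further points, which determine it.\<close>
lemma card_blocks_meeting:
  assumes e: "e \<in> carrier G" "e \<noteq> \<one>\<^bsub>G\<^esub>"
  shows "card {y \<in> D. y \<noteq> e \<and> block y \<inter> block e \<noteq> {}}
    = (if B \<inter> block e = {} then k * k else (k * card H - 2) + (k - 1) * (k - 1))"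
proof -
  define T where "T = B \<inter> block e"
  define S1 where "S1 = {y \<in> carrier G. block y \<inter> T \<noteq> {}} - {\<one>\<^bsub>G\<^esub>, e}"
  define S2 where "S2 = {y \<in> carrier G. block y \<inter> (B - T) \<noteq> {} \<and> block y \<inter> (block e - T) \<noteq> {}}"
  have split: "{y \<in> D. y \<noteq> e \<and> block y \<inter> block e \<noteq> {}} = S1 \<union> S2"
    by (auto simp: D_def S1_def S2_def T_def)
  have disjoint: "S1 \<inter> S2 = {}"
  proof (rule equals0I)
    fix y assume "y \<in> S1 \<inter> S2"
    then have y: "y \<in> S1" "y \<in> S2" by auto
    then obtain z u where "z \<in> block y" "z \<in> T" "u \<in> block y" "u \<in> B - T" "y \<in> carrier G"
      unfolding S1_def S2_def by blast
    then have "y = \<one>\<^bsub>G\<^esub>"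
      using eq_one_if_two_points_in_base[of y z u] by (auto simp: T_def)
    with y(1) show False
      by (simp add: S1_def)
  qed
  have card_S2: "card S2 = card (B - T) * card (block e - T)"
    unfolding S2_def by (rule card_blocks_meeting_both[OF G.one_closed e(1)]) (auto simp: T_def)
  have "finite S1" "finite S2"
    by (auto simp: S1_def S2_def intro: finite_subset[OF _ finite_carrier])
  then have card_split: "card {y \<in> D. y \<noteq> e \<and> block y \<inter> block e \<noteq> {}} = card S1 + card S2"
    by (simp add: split disjoint card_Un_disjoint)
  consider "T = {}" | z where "T = {z}" "z \<in> B" "z \<in> block e"
    using base_Int_block_eq_singleton[OF e] by (auto simp: T_def)
  then show ?thesis
  proof cases
    case 1
    then show ?thesis
      using e card_B card_block card_split card_S2 by (simp add: S1_def T_def)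
  next
    case 2
    have "{\<one>\<^bsub>G\<^esub>, e} \<subseteq> {y \<in> carrier G. z \<in> block y}"
      using 2 e by auto
    then have "card S1 = k * card H - 2"
      using 2 e card_blocks_containing[of z]
      by (simp add: S1_def card_Diff_subset finite_carrier)
    then show ?thesis
      using 2 e card_B card_block card_split card_S2 by (simp add: T_def)
  qed
qed


lemma one_notin_D: "\<one>\<^bsub>G\<^esub> \<notin> D"
  by (simp add: D_def)

lemma regular_pds:
  "is_regular_pds G D (card H * CARD('a)) (k * (k * card H - 1))
     ((k * card H - 2) + (k - 1) * (k - 1)) (k * k)"
  unfolding is_regular_pds_def is_pds_def
proof (intro conjI ballI impI)
  fix g assume g: "g \<in> carrier G" "g \<noteq> \<one>\<^bsub>G\<^esub>"
  then have "inv\<^bsub>G\<^esub> g \<in> carrier G" "inv\<^bsub>G\<^esub> g \<noteq> \<one>\<^bsub>G\<^esub>"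
    by (auto simp: G.inv_eq_1_iff)
  moreover have "g \<in> D \<longleftrightarrow> B \<inter> block (inv\<^bsub>G\<^esub> g) \<noteq> {}"
    using g block_inv_meets_base_iff[of g] by (auto simp: D_def)
  ultimately show "card {(x, y). x \<in> D \<and> y \<in> D \<and> x \<otimes>\<^bsub>G\<^esub> inv\<^bsub>G\<^esub> y = g}
      = (if g \<in> D then (k * card H - 2) + (k - 1) * (k - 1) else k * k)"
    using card_quotient_pairs[OF g(1)] card_blocks_meeting by simp
qed (simp_all add: card_carrier D_subset card_D inv_D one_notin_D)

end

lemma card_minus_one_odd_multiple:
  fixes q k :: nat
  assumes "k \<ge> 3" "[q = k * (k - 1) + 1] (mod 2 * k * (k - 1))"
  shows "\<exists>n. odd n \<and> q - 1 = k * (k - 1) * n"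
proof -
  define c where "c = k * (k - 1)"
  define t where "t = q div (2 * c)"
  have "3 * 2 \<le> c"
    unfolding c_def using assms(1) by (intro mult_le_mono) auto
  have "q mod (2 * c) = (c + 1) mod (2 * c)"
    using assms(2) by (simp add: cong_def mult.assoc c_def)
  also have "\<dots> = c + 1"
    using \<open>3 * 2 \<le> c\<close> by simp
  finally have "q = 2 * c * t + (c + 1)"
    using mult_div_mod_eq[of "2 * c" q] by (simp add: t_def)
  then have "q - 1 = c * (2 * t + 1)"
    by (simp add: algebra_simps)
  then show ?thesis
    using c_def by (intro exI[of _ "2 * t + 1"]) simp
qed

lemma exists_affine_base_block:
  fixes H :: "'a::{field,finite} set"
  assumes k: "k \<ge> 3" and "odd n" and card_units_eq: "CARD('a) - 1 = k * (k - 1) * n"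
    and large: "(k * (k - 1) div 2) ^ (k * (k - 1)) < CARD('a)"
    and H: "mult_subgroup H" "card H = n"
  shows "\<exists>B. affine_base_block H B k"
proof -
  define m where "m = k * (k - 1) div 2"
  have "even (k * (k - 1))"
    by (cases "even k") auto
  then have two_m: "2 * m = k * (k - 1)"
    by (simp add: m_def)
  obtain g :: 'a where "primitive_element g"
    using finite_field_has_primitive_element by (auto simp: primitive_element_def)
  moreover have "(m ^ m)\<^sup>2 < CARD('a)"
  proof -
    have "(m ^ m)\<^sup>2 = m ^ (k * (k - 1))"
      by (metis two_m power_mult mult.commute)
    then show ?thesis
      using large by (simp add: m_def)
  qed
  ultimately interpret prescribed_differences g k m n
    using k two_m card_units_eq \<open>odd n\<close>
    by unfold_locales (simp_all add: primitive_element_def flip: two_m)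
  obtain B where B: "card B = k" "differences_in_distinct_cosets H B"
    using exists_base_block_for_subgroup[OF H] by blast
  have "affine_base_block H B k"
  proof (rule affine_base_block.intro[OF H(1)], unfold_locales)
    show "\<exists>a\<in>B. \<exists>b\<in>B. a \<noteq> b \<and> \<delta> / (a - b) \<in> H" if "\<delta> \<noteq> 0" for \<delta>
      using mult_subgroup.differences_cover_cosets[OF H(1) B card_units_eq[folded H(2)] that] .
  qed (use B in auto)
  then show ?thesis ..
qed

lemma pds_parameters:
  fixes q k n :: nat
  assumes "k \<ge> 2" "n \<ge> 1" and q: "q - 1 = k * (k - 1) * n"
  shows "q * (q - 1) div (k * (k - 1)) = n * q"
    and "k * (q - k) div (k - 1) = k * (k * n - 1)"
    and "(q - 1) div (k - 1) + (k - 1)\<^sup>2 - 2 = (k * n - 2) + (k - 1) * (k - 1)"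
proof -
  show "q * (q - 1) div (k * (k - 1)) = n * q"
    using assms by (simp add: q)
  have "q - k = (k - 1) * (k * n - 1)"
    using assms by (simp add: algebra_simps diff_mult_distrib2)
  then show "k * (q - k) div (k - 1) = k * (k * n - 1)"
    using assms by simp
  have "k * n \<ge> 2"
    using assms mult_le_mono[of 2 k 1 n] by simp
  then show "(q - 1) div (k - 1) + (k - 1)\<^sup>2 - 2 = (k * n - 2) + (k - 1) * (k - 1)"
    using assms by (simp add: q power2_eq_square)
qed

theorem mainTheorem19:
  fixes k p d :: nat and H0 :: "'a::{field, finite} set"
  assumes k3: "k \<ge> 3"
    and p_prime: "prime p"
    and d1: "d \<ge> 1"
    and card_field: "card (UNIV :: 'a set) = p ^ d"
    and q_large: "card (UNIV :: 'a set) > (k * (k - 1) div 2) ^ (k * (k - 1))"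
    and q_cong: "[card (UNIV :: 'a set) = k * (k - 1) + 1] (mod (2 * k * (k - 1)))"
    and H0_sub: "0 \<notin> H0"
    and H0_one: "1 \<in> H0"
    and H0_mult: "\<And>x y. x \<in> H0 \<Longrightarrow> y \<in> H0 \<Longrightarrow> x * y \<in> H0"
    and H0_inv: "\<And>x. x \<in> H0 \<Longrightarrow> inverse x \<in> H0"
    and H0_card: "card H0 = (card (UNIV :: 'a set) - 1) div (k * (k - 1))"
  shows "\<exists>D. is_regular_pds (affine_group H0) D
           (card (UNIV :: 'a set) * (card (UNIV :: 'a set) - 1) div (k * (k - 1)))
           (k * (card (UNIV :: 'a set) - k) div (k - 1))
           ((card (UNIV :: 'a set) - 1) div (k - 1) + (k - 1)^2 - 2)
           (k^2)"
proof -
  obtain n where "odd n" and card_units: "CARD('a) - 1 = k * (k - 1) * n"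
    using card_minus_one_odd_multiple[OF k3 q_cong] by blast
  have card_H0: "card H0 = n"
    using H0_card card_units k3 by simp
  have "mult_subgroup H0"
    using H0_sub H0_one H0_mult H0_inv by unfold_locales
  then obtain B where "affine_base_block H0 B k"
    using exists_affine_base_block[OF k3 \<open>odd n\<close> card_units q_large _ card_H0] by blast
  then have "is_regular_pds (affine_group H0) (affine_base_block.D H0 B) (card H0 * CARD('a))
      (k * (k * card H0 - 1)) ((k * card H0 - 2) + (k - 1) * (k - 1)) (k * k)"
    by (rule affine_base_block.regular_pds)
  moreover have "n \<ge> 1"
    using \<open>odd n\<close> odd_pos by fastforce
  ultimately show ?thesis
    using pds_parameters[OF _ _ card_units] k3 card_H0 by (auto simp: power2_eq_square)
qed

end
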